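(* Let $\mathcal{A}$ be a finite abelian group, $\mathbb{M}$ a countable monoid, $\mathfrak{F}:\mathcal{A}^{\mathbb{M}}\to\mathcal{A}^{\mathbb{M}}$ a linear cellular automaton, and $\mu$ a harmonically mixing probability measure on $\mathcal{A}^{\mathbb{M}}$. (1) If $\mathfrak{F}$ is diffusive, then $\mathfrak{F}^j\mu\to\eta$ in the weak* topology as $j\to\infty$. (2) If $\mathfrak{F}$ is diffusive in density, then there is a set $J\subset\mathbb{N}$ of Cesàro density $1$ such that $\mathfrak{F}^j\mu\to\eta$ weak* as $j\to\infty$, $j\in J$; consequently $\frac1N\sum_{n=1}^N\mathfrak{F}^n\mu\to\eta$ weak*.
   Context: $\eta$ denotes the Haar measure on the compact group $\mathcal{A}^{\mathbb{M}}$ (product of uniform measures). $\mathfrak{F}^j\mu=\mu\circ\mathfrak{F}^{-j}$. An LCA is a continuous group endomorphism commuting with all shifts $\sigma^e$, $(\sigma^e\mathbf{a})_m=a_{e.m}$. Characters of $\mathcal{A}^{\mathbb{M}}$ are $\chi=\bigotimes_m\chi_m$, $\chi_m$ characters of $\mathcal{A}$, all but finitely many trivial; rank$(\chi)$ is the number of nontrivial $\chi_m$. $\mu$ is harmonically mixing if for every $\varepsilon>0$ there is $R$ with rank$(\chi)>R\Rightarrow|\int\chi\,d\mu|<\varepsilon$. $\mathfrak{F}$ is diffusive if for every nontrivial character $\chi$, rank$(\chi\circ\mathfrak{F}^n)\to\infty$ as $n\to\infty$; it is diffusive in density if for every nontrivial character $\chi$ there is $J_\chi\subset\mathbb{N}$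 of Cesàro density 1 (i.e. $|J_\chi\cap[1,N]|/N\to1$) with rank$(\chi\circ\mathfrak{F}^j)\to\infty$ as $j\to\infty$, $j\in J_\chi$. *)

theory Defs
  imports "HOL-Probability.Probability"
begin

definition cfg_topology :: "('m \<Rightarrow> 'a) topology" where
  "cfg_topology = product_topology (\<lambda>_. discrete_topology UNIV) UNIV"

definition cfg_space :: "('m \<Rightarrow> 'a) measure" where
  "cfg_space = PiM UNIV (\<lambda>_. count_space UNIV)"

definition haar :: "('m \<Rightarrow> 'a::finite) measure" where
  "haar = PiM UNIV (\<lambda>_. uniform_count_measure UNIV)"

definition shift :: "'m::monoid_mult \<Rightarrow> ('m \<Rightarrow> 'a) \<Rightarrow> ('m \<Rightarrow> 'a)" where
  "shift e x = (\<lambda>m. x (e * m))"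

definition is_LCA :: "(('m::monoid_mult \<Rightarrow> 'a::ab_group_add) \<Rightarrow> ('m \<Rightarrow> 'a)) \<Rightarrow> bool" where
  "is_LCA F \<longleftrightarrow>
     continuous_map cfg_topology cfg_topology F \<and>
     (\<forall>x y. F (\<lambda>m. x m + y m) = (\<lambda>m. F x m + F y m)) \<and>
     (\<forall>e x. F (shift e x) = shift e (F x))"

definition group_char :: "('a::ab_group_add \<Rightarrow> complex) \<Rightarrow> bool" where
  "group_char ch \<longleftrightarrow> (\<forall>x y. ch (x + y) = ch x * ch y) \<and> (\<forall>x. norm (ch x) = 1)"

definition char_supp :: "('m \<Rightarrow> 'a \<Rightarrow> complex) \<Rightarrow> 'm set" where
  "char_supp c = {m. c m \<noteq> (\<lambda>_. 1)}"

definition char_family :: "('m \<Rightarrow> 'a::ab_group_add \<Rightarrow> complex) \<Rightarrow> bool" where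
  "char_family c \<longleftrightarrow> (\<forall>m. group_char (c m)) \<and> finite (char_supp c)"

definition prod_char :: "('m \<Rightarrow> 'a \<Rightarrow> complex) \<Rightarrow> ('m \<Rightarrow> 'a) \<Rightarrow> complex" where
  "prod_char c x = (\<Prod>m\<in>char_supp c. c m (x m))"

definition characters :: "(('m \<Rightarrow> 'a::ab_group_add) \<Rightarrow> complex) set" where
  "characters = {prod_char c | c. char_family c}"

text \<open>Rank: number of nontrivial factors of the (unique) tensor decomposition.\<close>
definition char_rank :: "(('m \<Rightarrow> 'a::ab_group_add) \<Rightarrow> complex) \<Rightarrow> nat" where
  "char_rank ch = card (char_supp (THE c. char_family c \<and> prod_char c = ch))"

definition harmonically_mixing :: "('m \<Rightarrow> 'a::ab_group_add) measure \<Rightarrow> bool" where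
  "harmonically_mixing \<mu> \<longleftrightarrow>
     (\<forall>eps>0. \<exists>R. \<forall>ch\<in>characters. char_rank ch > R \<longrightarrow> norm (LINT x|\<mu>. ch x) < eps)"

definition diffusive :: "(('m \<Rightarrow> 'a::ab_group_add) \<Rightarrow> ('m \<Rightarrow> 'a)) \<Rightarrow> bool" where
  "diffusive F \<longleftrightarrow>
     (\<forall>ch\<in>characters. ch \<noteq> (\<lambda>_. 1) \<longrightarrow>
        filterlim (\<lambda>n. char_rank (ch \<circ> (F ^^ n))) at_top sequentially)"

definition density_one :: "nat set \<Rightarrow> bool" where
  "density_one J \<longleftrightarrow> (\<lambda>N. real (card (J \<inter> {1..N})) / real N) \<longlonglongrightarrow> 1"

definition diffusive_in_density :: "(('m \<Rightarrow> 'a::ab_group_add) \<Rightarrow> ('m \<Rightarrow> 'a)) \<Rightarrow> bool" where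
  "diffusive_in_density F \<longleftrightarrow>
     (\<forall>ch\<in>characters. ch \<noteq> (\<lambda>_. 1) \<longrightarrow>
        (\<exists>J. density_one J \<and>
           filterlim (\<lambda>j. char_rank (ch \<circ> (F ^^ j))) at_top (sequentially \<sqinter> principal J)))"

definition weak_star_conv ::
  "('i \<Rightarrow> ('m \<Rightarrow> 'a) measure) \<Rightarrow> ('m \<Rightarrow> 'a) measure \<Rightarrow> 'i filter \<Rightarrow> bool" where
  "weak_star_conv \<mu>s \<nu> G \<longleftrightarrow>
     (\<forall>f. continuous_map cfg_topology euclideanreal f \<longrightarrow>
        ((\<lambda>i. integral\<^sup>L (\<mu>s i) f) \<longlongrightarrow> integral\<^sup>L \<nu> f) G)"

definition push :: "(('m \<Rightarrow> 'a) \<Rightarrow> ('m \<Rightarrow> 'a)) \<Rightarrow> nat \<Rightarrow> ('m \<Rightarrow> 'a) measure \<Rightarrow> ('m \<Rightarrow> 'a) measure" where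
  "push F j \<mu> = distr \<mu> cfg_space (F ^^ j)"

end

theory Submission
  imports Defs
begin

text \<open>Since \<open>\<integral> f d(\<F>\<^sup>j \<mu>) = \<integral> f \<circ> \<F>\<^sup>j d\<mu>\<close> and a character composed with the continuous
  additive map \<open>\<F>\<^sup>j\<close> is again a character, diffusion together with harmonic mixing makes
  \<open>\<integral> \<chi> d(\<F>\<^sup>j \<mu>)\<close> tend to \<open>0 = \<integral> \<chi> d\<eta>\<close> for every nontrivial character \<open>\<chi>\<close>.
  Characters of the finite group \<open>\<A>\<close> separate points, so products of characters of single
  coordinates span all functions of finitely many coordinates; by compactness these are uniformly
  dense in the continuous functions, and convergence on characters is weak* convergence.
  In the density version countably many characters suffice, a diagonal argument yields one set
  of density one serving all of them, and a bounded sequence converging along a set of density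
  one converges in Cesaro mean.\<close>

section \<open>Characters of finite abelian groups\<close>

primrec nat_smult :: "nat \<Rightarrow> 'a::ab_group_add \<Rightarrow> 'a" where
  "nat_smult 0 g = 0"
| "nat_smult (Suc k) g = g + nat_smult k g"

lemma nat_smult_add: "nat_smult (i + j) g = nat_smult i g + nat_smult j g"
  by (induction i) (auto simp: add.assoc)

lemma nat_smult_mult: "nat_smult (i * j) g = nat_smult i (nat_smult j g)"
  by (induction i) (auto simp: nat_smult_add)

lemma nat_smult_zero [simp]: "nat_smult k 0 = 0"
  by (induction k) auto

lemma ex_nat_smult_eq_0:
  fixes g :: "'a::{ab_group_add,finite}"
  shows "\<exists>d>0. nat_smult d g = 0"
proof -
  have "\<not> inj (\<lambda>k. nat_smult k g)"
    using range_inj_infinite[of "\<lambda>k. nat_smult k g"] by auto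
  then obtain i j where "i < j" "nat_smult i g = nat_smult j g"
    unfolding inj_def by (metis linorder_neqE_nat)
  moreover have "nat_smult j g = nat_smult i g + nat_smult (j - i) g"
    using \<open>i < j\<close> by (simp flip: nat_smult_add)
  ultimately show ?thesis by (intro exI[of _ "j - i"]) auto
qed

lemma uminus_nat_smult:
  fixes g :: "'a::{ab_group_add,finite}"
  shows "\<exists>k'. - nat_smult k g = nat_smult k' g"
proof -
  obtain d where d: "d > 0" "nat_smult d g = 0" using ex_nat_smult_eq_0 by blast
  have "nat_smult k g + nat_smult (k * (d - 1)) g = nat_smult (k * d) g"
    using d(1) by (simp flip: nat_smult_add) (simp add: algebra_simps)
  also have "\<dots> = 0" by (simp only: nat_smult_mult d(2) nat_smult_zero)
  finally show ?thesis by (metis minus_unique)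
qed

definition is_subgroup :: "'a::ab_group_add set \<Rightarrow> bool" where
  "is_subgroup H \<longleftrightarrow> 0 \<in> H \<and> (\<forall>x\<in>H. \<forall>y\<in>H. x + y \<in> H) \<and> (\<forall>x\<in>H. - x \<in> H)"

definition char_on :: "'a::ab_group_add set \<Rightarrow> ('a \<Rightarrow> complex) \<Rightarrow> bool" where
  "char_on H \<phi> \<longleftrightarrow> (\<forall>x\<in>H. \<forall>y\<in>H. \<phi> (x + y) = \<phi> x * \<phi> y) \<and> (\<forall>x\<in>H. norm (\<phi> x) = 1)"

lemma char_on_UNIV: "char_on UNIV \<phi> \<longleftrightarrow> group_char \<phi>"
  by (simp add: char_on_def group_char_def)

lemma is_subgroup_nat_smult: "is_subgroup H \<Longrightarrow> g \<in> H \<Longrightarrow> nat_smult k g \<in> H"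
  by (induction k) (auto simp: is_subgroup_def)

lemma is_subgroup_diff: "is_subgroup H \<Longrightarrow> x \<in> H \<Longrightarrow> y \<in> H \<Longrightarrow> x - y \<in> H"
  unfolding is_subgroup_def by (metis diff_conv_add_uminus)

lemma char_on_zero:
  assumes "char_on H \<phi>" "0 \<in> H"
  shows "\<phi> 0 = 1"
proof -
  have "\<phi> 0 * \<phi> 0 = \<phi> 0 * 1" "\<phi> 0 \<noteq> 0"
    using assms by (auto simp: char_on_def dest!: bspec[of _ _ 0])
  then show ?thesis by simp
qed

lemma group_char_zero: "group_char \<phi> \<Longrightarrow> \<phi> 0 = 1"
  using char_on_zero[of UNIV] by (simp add: char_on_UNIV)

lemma char_on_nat_smult:
  assumes "is_subgroup H" "char_on H \<phi>" "g \<in> H"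
  shows "\<phi> (nat_smult k g) = \<phi> g ^ k"
proof (induction k)
  case 0
  show ?case using char_on_zero[OF assms(2)] assms(1) by (simp add: is_subgroup_def)
next
  case (Suc k)
  then show ?case using assms is_subgroup_nat_smult[OF assms(1,3)] by (simp add: char_on_def)
qed

definition rel_order :: "'a::ab_group_add set \<Rightarrow> 'a \<Rightarrow> nat" where
  "rel_order H g = (LEAST n. 0 < n \<and> nat_smult n g \<in> H)"

lemma rel_order:
  fixes g :: "'a::{ab_group_add,finite}"
  assumes "0 \<in> H"
  shows "0 < rel_order H g" "nat_smult (rel_order H g) g \<in> H"
proof -
  obtain d where "d > 0" "nat_smult d g = 0" using ex_nat_smult_eq_0 by blast
  then have "\<exists>n. 0 < n \<and> nat_smult n g \<in> H" using assms by auto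
  from LeastI_ex[OF this] show "0 < rel_order H g" "nat_smult (rel_order H g) g \<in> H"
    unfolding rel_order_def by auto
qed

lemma rel_order_dvd:
  fixes g :: "'a::{ab_group_add,finite}"
  assumes H: "is_subgroup H" and k: "nat_smult k g \<in> H"
  shows "rel_order H g dvd k"
proof -
  let ?n = "rel_order H g"
  have n: "0 < ?n" "nat_smult ?n g \<in> H" using rel_order H by (auto simp: is_subgroup_def)
  have "nat_smult k g = nat_smult (k div ?n * ?n + k mod ?n) g" by (simp only: div_mult_mod_eq)
  also have "\<dots> = nat_smult (k div ?n) (nat_smult ?n g) + nat_smult (k mod ?n) g"
    by (simp only: nat_smult_add nat_smult_mult)
  finally have "nat_smult k g = nat_smult (k div ?n) (nat_smult ?n g) + nat_smult (k mod ?n) g" .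
  then have "nat_smult (k mod ?n) g = nat_smult k g - nat_smult (k div ?n) (nat_smult ?n g)"
    by (simp add: algebra_simps)
  also have "\<dots> \<in> H" using is_subgroup_diff[OF H k is_subgroup_nat_smult[OF H n(2)]] .
  finally have "k mod ?n = 0"
    using not_less_Least[of "k mod ?n" "\<lambda>n. 0 < n \<and> nat_smult n g \<in> H"] n(1)
    unfolding rel_order_def by (meson mod_less_divisor neq0_conv)
  then show ?thesis by auto
qed

definition adjoin :: "'a::ab_group_add set \<Rightarrow> 'a \<Rightarrow> 'a set" where
  "adjoin H g = {h + nat_smult k g | h k. h \<in> H}"

lemma subset_adjoin: "H \<subseteq> adjoin H g"
  unfolding adjoin_def by (force intro: exI[of _ 0])

lemma mem_adjoin: "0 \<in> H \<Longrightarrow> g \<in> adjoin H g"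
  unfolding adjoin_def by (force intro: exI[of _ 0] exI[of _ 1])

lemma is_subgroup_adjoin:
  fixes g :: "'a::{ab_group_add,finite}"
  assumes H: "is_subgroup H"
  shows "is_subgroup (adjoin H g)"
  unfolding is_subgroup_def
proof (intro conjI ballI)
  show "0 \<in> adjoin H g" using H subset_adjoin by (auto simp: is_subgroup_def)
next
  fix x y assume "x \<in> adjoin H g" "y \<in> adjoin H g"
  then obtain h1 k1 h2 k2 where "x = h1 + nat_smult k1 g" "y = h2 + nat_smult k2 g" "h1 \<in> H" "h2 \<in> H"
    by (auto simp: adjoin_def)
  with H show "x + y \<in> adjoin H g"
    by (auto simp: adjoin_def is_subgroup_def nat_smult_add algebra_simps
        intro!: exI[of _ "h1 + h2"] exI[of _ "k1 + k2"])
next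
  fix x assume "x \<in> adjoin H g"
  then obtain h k where "x = h + nat_smult k g" "h \<in> H" by (auto simp: adjoin_def)
  moreover obtain k' where "- nat_smult k g = nat_smult k' g" using uminus_nat_smult by blast
  ultimately show "- x \<in> adjoin H g" using H
    by (auto simp: adjoin_def is_subgroup_def intro!: exI[of _ "- h"] exI[of _ k'])
qed

text \<open>The prescribed value \<open>w\<close> at \<open>g\<close> is compatible with \<open>\<phi>\<close> because \<open>rel_order H g\<close> divides
  every \<open>k\<close> with \<open>k g \<in> H\<close>.\<close>

lemma char_on_adjoin_well_defined:
  fixes g :: "'a::{ab_group_add,finite}"
  assumes H: "is_subgroup H" and \<phi>: "char_on H \<phi>"
    and w: "w ^ rel_order H g = \<phi> (nat_smult (rel_order H g) g)"
    and hh': "h \<in> H" "h' \<in> H" "h + nat_smult k g = h' + nat_smult k' g"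
  shows "\<phi> h * w ^ k = \<phi> h' * w ^ k'"
proof -
  let ?n = "rel_order H g"
  have ordered: "\<phi> h * w ^ k = \<phi> h' * w ^ k'"
    if "h \<in> H" "h' \<in> H" "h + nat_smult k g = h' + nat_smult k' g" "k \<le> k'" for h h' k k'
  proof -
    have "nat_smult k' g = nat_smult k g + nat_smult (k' - k) g"
      using that(4) by (simp flip: nat_smult_add)
    then have "nat_smult (k' - k) g = h - h'"
      using that(3) by (simp add: algebra_simps)
    then have "?n dvd k' - k" using is_subgroup_diff[OF H that(1,2)] rel_order_dvd[OF H] by simp
    then obtain q where q: "k' - k = ?n * q" by blast
    have ng: "nat_smult ?n g \<in> H" using rel_order H by (auto simp: is_subgroup_def)
    have "h = h' + nat_smult q (nat_smult ?n g)"
      using \<open>nat_smult (k' - k) g = h - h'\<close> q by (simp add: mult.commute nat_smult_mult algebra_simps)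
    then have "\<phi> h = \<phi> h' * \<phi> (nat_smult ?n g) ^ q"
      using \<phi> that(2) is_subgroup_nat_smult[OF H ng] char_on_nat_smult[OF H \<phi> ng]
      by (simp add: char_on_def)
    also have "\<dots> = \<phi> h' * w ^ (k' - k)" by (simp add: q w power_mult)
    finally show ?thesis using that(4) by (simp add: mult.assoc flip: power_add)
  qed
  show ?thesis using ordered[OF hh'] ordered[OF hh'(2,1) hh'(3)[symmetric]] by (cases "k \<le> k'") auto
qed

lemma char_on_adjoin:
  fixes g :: "'a::{ab_group_add,finite}"
  assumes H: "is_subgroup H" and \<phi>: "char_on H \<phi>"
    and w: "w ^ rel_order H g = \<phi> (nat_smult (rel_order H g) g)"
  shows "\<exists>\<psi>. char_on (adjoin H g) \<psi> \<and> (\<forall>x\<in>H. \<psi> x = \<phi> x) \<and> \<psi> g = w"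
proof -
  let ?n = "rel_order H g"
  have "norm w ^ ?n = 1"
    using w \<phi> rel_order[of H g] H by (simp add: char_on_def is_subgroup_def flip: norm_power)
  then have norm_w: "norm w = 1"
    using rel_order(1)[of H g] H unfolding is_subgroup_def
    by (metis norm_ge_zero power_eq_iff_eq_base power_one zero_le_one)
  define \<psi> where "\<psi> x = (let (h, k) = SOME (h, k). h \<in> H \<and> x = h + nat_smult k g in \<phi> h * w ^ k)" for x
  have \<psi>: "\<psi> (h + nat_smult k g) = \<phi> h * w ^ k" if "h \<in> H" for h k
  proof -
    let ?P = "\<lambda>(h', k'). h' \<in> H \<and> h + nat_smult k g = h' + nat_smult k' g"
    obtain h' k' where hk': "(SOME r. ?P r) = (h', k')" by fastforce
    have "?P (SOME r. ?P r)" using someI[of ?P "(h, k)"] that by simp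
    then have "h' \<in> H" "h' + nat_smult k' g = h + nat_smult k g" unfolding hk' by auto
    have "\<psi> (h + nat_smult k g) = \<phi> h' * w ^ k'" unfolding \<psi>_def hk' by simp
    also have "\<dots> = \<phi> h * w ^ k"
      by (rule char_on_adjoin_well_defined[OF H \<phi> w]) fact+
    finally show ?thesis .
  qed
  have "char_on (adjoin H g) \<psi>"
    unfolding char_on_def
  proof (intro conjI ballI)
    fix x y assume "x \<in> adjoin H g" "y \<in> adjoin H g"
    then obtain h1 k1 h2 k2 where xy: "x = h1 + nat_smult k1 g" "y = h2 + nat_smult k2 g" "h1 \<in> H" "h2 \<in> H"
      by (auto simp: adjoin_def)
    then have sum: "x + y = (h1 + h2) + nat_smult (k1 + k2) g" by (simp add: nat_smult_add algebra_simps)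
    have "h1 + h2 \<in> H" using H xy by (auto simp: is_subgroup_def)
    then have "\<psi> (x + y) = \<phi> (h1 + h2) * w ^ (k1 + k2)" unfolding sum by (rule \<psi>)
    also have "\<dots> = \<psi> x * \<psi> y" using \<phi> xy \<psi> by (simp add: char_on_def power_add mult_ac)
    finally show "\<psi> (x + y) = \<psi> x * \<psi> y" .
  next
    fix x assume "x \<in> adjoin H g"
    then obtain h k where "x = h + nat_smult k g" "h \<in> H" by (auto simp: adjoin_def)
    then show "norm (\<psi> x) = 1" using \<psi> \<phi> norm_w by (simp add: char_on_def norm_mult norm_power)
  qed
  moreover have "\<forall>x\<in>H. \<psi> x = \<phi> x" using \<psi>[of _ 0] by simp
  moreover have "\<psi> g = w" using \<psi>[of 0 1] char_on_zero[OF \<phi>] H by (simp add: is_subgroup_def)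
  ultimately show ?thesis by blast
qed

lemma ex_nth_root:
  assumes "n > 0" "(c::complex) \<noteq> 0"
  shows "\<exists>w. w ^ n = c"
proof -
  have "exp (Ln c / of_nat n) ^ n = exp (of_nat n * (Ln c / of_nat n))"
    by (rule exp_of_nat_mult[symmetric])
  also have "\<dots> = c" using assms by simp
  finally show ?thesis by blast
qed

lemma char_on_extend:
  fixes H :: "'a::{ab_group_add,finite} set"
  assumes "is_subgroup H" "char_on H \<phi>"
  shows "\<exists>\<psi>. group_char \<psi> \<and> (\<forall>x\<in>H. \<psi> x = \<phi> x)"
  using assms
proof (induction "card (UNIV - H)" arbitrary: H \<phi> rule: less_induct)
  case less
  show ?case
  proof (cases "H = UNIV")
    case True
    then show ?thesis using less.prems by (auto simp: char_on_UNIV)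
  next
    case False
    then obtain g where g: "g \<notin> H" by blast
    have "0 \<in> H" using less.prems by (simp add: is_subgroup_def)
    then have "norm (\<phi> (nat_smult (rel_order H g) g)) = 1"
      using less.prems(2) rel_order(2)[OF \<open>0 \<in> H\<close>, of g] by (simp add: char_on_def)
    then have "\<phi> (nat_smult (rel_order H g) g) \<noteq> 0" by auto
    then obtain w where "w ^ rel_order H g = \<phi> (nat_smult (rel_order H g) g)"
      using ex_nth_root[OF rel_order(1)[OF \<open>0 \<in> H\<close>]] by blast
    with char_on_adjoin[OF less.prems] obtain \<psi> where
      \<psi>: "char_on (adjoin H g) \<psi>" "\<forall>x\<in>H. \<psi> x = \<phi> x" by blast
    have "card (UNIV - adjoin H g) < card (UNIV - H)"
      using subset_adjoin[of H g] mem_adjoin[OF \<open>0 \<in> H\<close>] g by (intro psubset_card_mono) auto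
    from less.hyps[OF this is_subgroup_adjoin[OF less.prems(1)] \<psi>(1)] obtain \<psi>' where
      "group_char \<psi>'" "\<forall>x\<in>adjoin H g. \<psi>' x = \<psi> x" by blast
    then show ?thesis using \<psi>(2) subset_adjoin[of H g] by (intro exI[of _ \<psi>']) auto
  qed
qed

text \<open>Extend a character of the cyclic group generated by \<open>a\<close> that maps \<open>a\<close> to a nontrivial
  root of unity.\<close>

lemma ex_group_char_neq_1:
  fixes a :: "'a::{ab_group_add,finite}"
  assumes "a \<noteq> 0"
  shows "\<exists>\<phi>. group_char \<phi> \<and> \<phi> a \<noteq> 1"
proof -
  have H0: "is_subgroup {0::'a}" by (simp add: is_subgroup_def)
  have \<phi>0: "char_on {0::'a} (\<lambda>_. 1)" by (simp add: char_on_def)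
  let ?n = "rel_order {0} a"
  have n: "0 < ?n" "nat_smult ?n a = 0" using rel_order[of "{0}" a] by auto
  have "nat_smult 1 a = a" by simp
  then have "1 < ?n" using n assms by (metis less_one nat_neq_iff)
  have "\<not> {z::complex. z ^ ?n = 1} \<subseteq> {1}"
  proof
    assume "{z::complex. z ^ ?n = 1} \<subseteq> {1}"
    then have "card {z::complex. z ^ ?n = 1} \<le> card {1::complex}" by (intro card_mono) auto
    then show False using card_roots_unity_eq[OF n(1)] \<open>1 < ?n\<close> by simp
  qed
  then obtain w :: complex where "w ^ ?n = 1" "w \<noteq> 1" by blast
  with char_on_adjoin[OF H0 \<phi>0, of w] obtain \<psi> where \<psi>: "char_on (adjoin {0} a) \<psi>" "\<psi> a = w"
    by auto
  obtain \<phi> where "group_char \<phi>" "\<forall>x\<in>adjoin {0} a. \<phi> x = \<psi> x"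
    using char_on_extend[OF is_subgroup_adjoin[OF H0] \<psi>(1)] by blast
  then show ?thesis using mem_adjoin[of "{0}" a] \<psi>(2) \<open>w \<noteq> 1\<close> by auto
qed

definition separating_char :: "'a::{ab_group_add,finite} \<Rightarrow> 'a \<Rightarrow> complex" where
  "separating_char y = (SOME \<phi>. group_char \<phi> \<and> (y \<noteq> 0 \<longrightarrow> \<phi> y \<noteq> 1))"

lemma separating_char: "group_char (separating_char y)" "y \<noteq> 0 \<Longrightarrow> separating_char y y \<noteq> 1"
proof -
  have "\<exists>\<phi>. group_char \<phi> \<and> (y \<noteq> 0 \<longrightarrow> \<phi> y \<noteq> 1)"
  proof (cases "y = 0")
    case True
    then show ?thesis by (intro exI[of _ "\<lambda>_. 1"]) (simp add: group_char_def)
  qed (use ex_group_char_neq_1[of y] in blast)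
  from someI_ex[OF this] show "group_char (separating_char y)" "y \<noteq> 0 \<Longrightarrow> separating_char y y \<noteq> 1"
    unfolding separating_char_def by blast+
qed

lemma sum_group_char_eq_0:
  fixes \<phi> :: "'a::{ab_group_add,finite} \<Rightarrow> complex"
  assumes \<phi>: "group_char \<phi>" and "\<phi> \<noteq> (\<lambda>_. 1)"
  shows "(\<Sum>a\<in>UNIV. \<phi> a) = 0"
proof -
  obtain b where b: "\<phi> b \<noteq> 1" using assms by auto
  have "(\<Sum>a\<in>UNIV. \<phi> a) = (\<Sum>a\<in>UNIV. \<phi> (a + b))"
    by (rule sum.reindex_bij_betw[symmetric]) (rule bij_betwI[of _ _ _ "\<lambda>a. a - b"], auto)
  also have "\<dots> = \<phi> b * (\<Sum>a\<in>UNIV. \<phi> a)" using \<phi> by (simp add: group_char_def sum_distrib_left mult.commute)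
  finally have "(1 - \<phi> b) * (\<Sum>a\<in>UNIV. \<phi> a) = 0" by (simp add: algebra_simps)
  then show ?thesis using b by simp
qed

section \<open>Cylinders in the configuration space\<close>

lemma topspace_cfg_topology [simp]: "topspace cfg_topology = UNIV"
  by (simp add: cfg_topology_def)

lemma compact_space_cfg_topology: "compact_space (cfg_topology :: ('m \<Rightarrow> 'a::finite) topology)"
  unfolding cfg_topology_def compact_space_product_topology
  by (simp add: compact_space_discrete_topology)

lemma openin_cfg_topology_cylinder:
  assumes "openin cfg_topology S" "x \<in> S"
  shows "\<exists>W. finite W \<and> (\<forall>y. (\<forall>m\<in>W. y m = x m) \<longrightarrow> y \<in> S)"
proof -
  from assms obtain U where U: "finite {i. U i \<noteq> UNIV}" "x \<in> Pi\<^sub>E UNIV U" "Pi\<^sub>E UNIV U \<subseteq> S"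
    unfolding cfg_topology_def openin_product_topology_alt by auto
  show ?thesis
  proof (intro exI[of _ "{i. U i \<noteq> UNIV}"] conjI allI impI)
    fix y assume "\<forall>m\<in>{i. U i \<noteq> UNIV}. y m = x m"
    then have "y \<in> Pi\<^sub>E UNIV U" using U(2) by (auto simp: PiE_def Pi_def) (metis UNIV_I)
    then show "y \<in> S" using U(3) by blast
  qed (fact U(1))
qed

lemma openin_cylinder:
  assumes "finite W"
  shows "openin cfg_topology {y. \<forall>m\<in>W. y m = x m}"
  unfolding cfg_topology_def openin_product_topology_alt
proof (intro ballI)
  fix z assume z: "z \<in> {y. \<forall>m\<in>W. y m = x m}"
  let ?U = "\<lambda>i. if i \<in> W then {x i} else UNIV"
  show "\<exists>U. finite {i \<in> UNIV. U i \<noteq> topspace (discrete_topology UNIV)} \<and>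
             (\<forall>i\<in>UNIV. openin (discrete_topology UNIV) (U i)) \<and> z \<in> Pi\<^sub>E UNIV U \<and>
             Pi\<^sub>E UNIV U \<subseteq> {y. \<forall>m\<in>W. y m = x m}"
  proof (intro exI[of _ ?U] conjI ballI)
    show "finite {i \<in> UNIV. ?U i \<noteq> topspace (discrete_topology UNIV)}"
      using assms by (auto intro: finite_subset[of _ W])
  qed (use z in \<open>auto simp: PiE_def Pi_def\<close>)
qed

lemma continuous_map_cylinder_nbhd:
  assumes "continuous_map cfg_topology X f" "openin X U" "f x \<in> U"
  shows "\<exists>W. finite W \<and> (\<forall>y. (\<forall>m\<in>W. y m = x m) \<longrightarrow> f y \<in> U)"
  using openin_cfg_topology_cylinder[OF openin_continuous_map_preimage[OF assms(1,2)], of x] assms(3)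
  by auto

text \<open>The Lebesgue number lemma for the compact space of configurations, with cylinders
  in place of balls.\<close>

lemma uniform_cylinder_cover:
  fixes R :: "('m \<Rightarrow> 'a::finite) \<Rightarrow> ('m \<Rightarrow> 'a) \<Rightarrow> bool"
  assumes "\<And>x. \<exists>W. finite W \<and> (\<forall>y. (\<forall>m\<in>W. y m = x m) \<longrightarrow> R x y)"
  shows "\<exists>W. finite W \<and> (\<forall>y z. (\<forall>m\<in>W. y m = z m) \<longrightarrow> (\<exists>x. R x y \<and> R x z))"
proof -
  obtain W where W: "\<And>x. finite (W x)" "\<And>x y. \<forall>m\<in>W x. y m = x m \<Longrightarrow> R x y"
    using assms by metis
  let ?C = "\<lambda>x. {y. \<forall>m\<in>W x. y m = x m}"
  have "\<exists>\<F>. finite \<F> \<and> \<F> \<subseteq> range ?C \<and> topspace cfg_topology \<subseteq> \<Union>\<F>"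
    using compact_space_cfg_topology[unfolded compact_space_alt, rule_format, of "range ?C"]
      openin_cylinder[OF W(1)] by auto
  then obtain \<F> where \<F>: "finite \<F>" "\<F> \<subseteq> range ?C" "UNIV \<subseteq> \<Union>\<F>" by auto
  obtain X0 where X0: "finite X0" "\<F> = ?C ` X0"
    using finite_subset_image[OF \<F>(1,2)] by blast
  show ?thesis
  proof (intro exI[of _ "\<Union>x\<in>X0. W x"] conjI allI impI)
    show "finite (\<Union>x\<in>X0. W x)" using X0(1) W(1) by blast
    fix y z :: "'m \<Rightarrow> 'a" assume yz: "\<forall>m\<in>(\<Union>x\<in>X0. W x). y m = z m"
    have "y \<in> \<Union>(?C ` X0)" using \<F>(3) X0(2) by blast
    then obtain x where x: "x \<in> X0" "\<forall>m\<in>W x. y m = x m" by blast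
    moreover have "\<forall>m\<in>W x. z m = x m" using x yz by auto
    ultimately show "\<exists>x. R x y \<and> R x z" using W(2) by blast
  qed
qed

lemma continuous_map_uniformly_cylindrical:
  fixes f :: "('m \<Rightarrow> 'a::finite) \<Rightarrow> real"
  assumes f: "continuous_map cfg_topology euclideanreal f" and "e > 0"
  shows "\<exists>W. finite W \<and> (\<forall>x y. (\<forall>m\<in>W. x m = y m) \<longrightarrow> \<bar>f x - f y\<bar> < e)"
proof -
  have "\<exists>W. finite W \<and> (\<forall>y. (\<forall>m\<in>W. y m = x m) \<longrightarrow> f y \<in> ball (f x) (e / 2))" for x
    by (rule continuous_map_cylinder_nbhd[OF f]) (simp_all add: \<open>e > 0\<close>)
  from uniform_cylinder_cover[OF this] obtain W where W: "finite W"
    "\<forall>y z. (\<forall>m\<in>W. y m = z m) \<longrightarrow> (\<exists>x. dist (f x) (f y) < e / 2 \<and> dist (f x) (f z) < e / 2)"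
    unfolding mem_ball by blast
  show ?thesis
  proof (intro exI[of _ W] conjI allI impI)
    fix y z :: "'m \<Rightarrow> 'a" assume "\<forall>m\<in>W. y m = z m"
    then obtain x where "dist (f x) (f y) < e / 2" "dist (f x) (f z) < e / 2" using W(2) by blast
    then have "dist (f y) (f z) < e"
      using dist_triangle_half_l[of "f y" "f x" e "f z"] by (simp add: dist_commute)
    then show "\<bar>f y - f z\<bar> < e" by (simp add: dist_real_def)
  qed (fact W(1))
qed

lemma continuous_map_discrete_finite_dependence:
  fixes g :: "('m \<Rightarrow> 'a::finite) \<Rightarrow> 'b"
  assumes g: "continuous_map cfg_topology (discrete_topology UNIV) g"
  shows "\<exists>W. finite W \<and> (\<forall>x y. (\<forall>m\<in>W. x m = y m) \<longrightarrow> g x = g y)"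
proof -
  have "\<exists>W. finite W \<and> (\<forall>y. (\<forall>m\<in>W. y m = x m) \<longrightarrow> g y \<in> {g x})" for x
    by (rule continuous_map_cylinder_nbhd[OF g]) auto
  from uniform_cylinder_cover[OF this] obtain W where "finite W"
    "\<forall>y z. (\<forall>m\<in>W. y m = z m) \<longrightarrow> (\<exists>x. g y \<in> {g x} \<and> g z \<in> {g x})" by blast
  then show ?thesis by (intro exI[of _ W]) fastforce
qed

lemma continuous_map_coordinate:
  assumes "continuous_map cfg_topology cfg_topology G"
  shows "continuous_map cfg_topology (discrete_topology UNIV) (\<lambda>x. G x m)"
proof -
  have "continuous_map cfg_topology (discrete_topology UNIV) ((\<lambda>x. x m) \<circ> G)"
    using continuous_map_compose[OF assms, of "discrete_topology UNIV" "\<lambda>x. x m"]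
      continuous_map_product_projection[of m UNIV "\<lambda>_. discrete_topology UNIV"]
    unfolding cfg_topology_def by simp
  then show ?thesis by (simp add: o_def)
qed

lemma space_cfg_space [simp]: "space cfg_space = UNIV"
  by (auto simp: cfg_space_def space_PiM PiE_def extensional_def)

definition trunc :: "'m set \<Rightarrow> ('m \<Rightarrow> 'a::zero) \<Rightarrow> ('m \<Rightarrow> 'a)" where
  "trunc W x = (\<lambda>m. if m \<in> W then x m else 0)"

lemma finite_range_trunc:
  assumes "finite W"
  shows "finite (range (trunc W :: ('m \<Rightarrow> 'a::{zero,finite}) \<Rightarrow> _))"
proof -
  have "range (trunc W :: ('m \<Rightarrow> 'a) \<Rightarrow> _) \<subseteq> (\<lambda>g m. if m \<in> W then g m else 0) ` Pi\<^sub>E W (\<lambda>_. UNIV)"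
  proof
    fix t :: "'m \<Rightarrow> 'a" assume "t \<in> range (trunc W)"
    then obtain x where "t = trunc W x" by auto
    then show "t \<in> (\<lambda>g m. if m \<in> W then g m else 0) ` Pi\<^sub>E W (\<lambda>_. UNIV)"
      by (intro image_eqI[of _ _ "restrict x W"]) (auto simp: trunc_def)
  qed
  moreover have "finite (Pi\<^sub>E W (\<lambda>_. UNIV::'a set))" using assms by (simp add: finite_PiE)
  ultimately show ?thesis by (meson finite_imageI finite_subset)
qed

lemma cylinder_in_sets_cfg_space:
  assumes "finite W"
  shows "{x. \<forall>m\<in>W. x m = t m} \<in> sets cfg_space"
  using assms
proof (induction W rule: finite_induct)
  case empty
  then show ?case using sets.top[of cfg_space] by simp
next
  case (insert m W)
  have eq: "{x. \<forall>i\<in>insert m W. x i = t i} =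
      ((\<lambda>x. x m) -` {t m} \<inter> space cfg_space) \<inter> {x. \<forall>i\<in>W. x i = t i}"
    by auto
  have "(\<lambda>x. x m) \<in> measurable cfg_space (count_space UNIV)"
    unfolding cfg_space_def by (rule measurable_component_singleton) simp
  then have "(\<lambda>x. x m) -` {t m} \<inter> space cfg_space \<in> sets cfg_space"
    by (rule measurable_sets) simp
  then show ?case unfolding eq using insert.IH by (rule sets.Int)
qed

lemma measurable_cfg_space_finite_dependence:
  fixes h :: "('m \<Rightarrow> 'a::{zero,finite}) \<Rightarrow> 'b"
  assumes W: "finite W" and dep: "\<And>x y. \<forall>m\<in>W. x m = y m \<Longrightarrow> h x = h y"
    and "\<And>x. h x \<in> space N"
  shows "h \<in> measurable cfg_space N"
proof (rule measurableI)
  fix A assume "A \<in> sets N"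
  let ?T = "{t \<in> range (trunc W). h t \<in> A}"
  have agree: "\<forall>m\<in>W. x m = trunc W x m" for x :: "'m \<Rightarrow> 'a" by (simp add: trunc_def)
  have "h -` A \<inter> space cfg_space = (\<Union>t\<in>?T. {x. \<forall>m\<in>W. x m = t m})"
  proof (intro set_eqI iffI)
    fix x assume "x \<in> h -` A \<inter> space cfg_space"
    then have "trunc W x \<in> ?T" using dep[OF agree] by simp
    then show "x \<in> (\<Union>t\<in>?T. {x. \<forall>m\<in>W. x m = t m})" using agree by blast
  next
    fix x assume "x \<in> (\<Union>t\<in>?T. {x. \<forall>m\<in>W. x m = t m})"
    then obtain t where "t \<in> ?T" "\<forall>m\<in>W. x m = t m" by blast
    then show "x \<in> h -` A \<inter> space cfg_space" using dep[of x t] by simp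
  qed
  moreover have "finite ?T" using finite_range_trunc[OF W] by (rule finite_subset[rotated]) auto
  ultimately show "h -` A \<inter> space cfg_space \<in> sets cfg_space"
    by (simp add: sets.finite_UN cylinder_in_sets_cfg_space W)
qed (use assms in simp)

lemma continuous_map_LCA_funpow:
  assumes "is_LCA F"
  shows "continuous_map cfg_topology cfg_topology (F ^^ j)"
  using assms by (induction j) (auto simp: is_LCA_def intro: continuous_map_compose)

lemma LCA_funpow_add:
  assumes "is_LCA F"
  shows "(F ^^ j) (\<lambda>m. x m + y m) = (\<lambda>m. (F ^^ j) x m + (F ^^ j) y m)"
  using assms by (induction j) (auto simp: is_LCA_def)

lemma measurable_continuous_map_cfg:
  fixes G :: "('m \<Rightarrow> 'a::{zero,finite}) \<Rightarrow> ('n \<Rightarrow> 'b)"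
  assumes "continuous_map cfg_topology cfg_topology G"
  shows "G \<in> measurable cfg_space cfg_space"
proof -
  have "(\<lambda>x. G x n) \<in> measurable cfg_space (count_space UNIV)" for n
  proof -
    obtain W where "finite W" "\<forall>x y. (\<forall>m\<in>W. x m = y m) \<longrightarrow> G x n = G y n"
      using continuous_map_discrete_finite_dependence[OF continuous_map_coordinate[OF assms]] by blast
    then show ?thesis by (intro measurable_cfg_space_finite_dependence) auto
  qed
  then have "(\<lambda>x n. G x n) \<in> measurable cfg_space (Pi\<^sub>M UNIV (\<lambda>_. count_space UNIV))"
    by (intro measurable_PiM_single') (auto simp: PiE_def extensional_def)
  then show ?thesis unfolding cfg_space_def[symmetric] by simp
qed

section \<open>Characters of the configuration space\<close>

lemma prod_char_superset:
  assumes "finite S" "char_supp c \<subseteq> S"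
  shows "prod_char c x = (\<Prod>m\<in>S. c m (x m))"
  unfolding prod_char_def by (rule prod.mono_neutral_left[OF assms]) (auto simp: char_supp_def)

lemma prod_char_add:
  assumes "char_family c"
  shows "prod_char c (\<lambda>m. x m + y m) = prod_char c x * prod_char c y"
  using assms unfolding prod_char_def by (simp add: char_family_def group_char_def prod.distrib)

lemma norm_prod_char:
  assumes "char_family c"
  shows "norm (prod_char c x) = 1"
  using assms unfolding prod_char_def by (simp add: char_family_def group_char_def prod_norm[symmetric])

lemma prod_char_cong:
  assumes "\<forall>m\<in>char_supp c. x m = y m"
  shows "prod_char c x = prod_char c y"
  unfolding prod_char_def using assms by (intro prod.cong) auto

lemma characters_norm: "ch \<in> characters \<Longrightarrow> norm (ch x) = 1"
  by (auto simp: characters_def norm_prod_char)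

lemma characters_finite_dependence:
  assumes "ch \<in> characters"
  obtains W where "finite W" "\<And>x y. \<forall>m\<in>W. x m = y m \<Longrightarrow> ch x = ch y"
  using assms by (auto simp: characters_def char_family_def intro: prod_char_cong)

lemma hom_trunc:
  fixes \<psi> :: "('m \<Rightarrow> 'a::ab_group_add) \<Rightarrow> complex"
  assumes hom: "\<And>x y. \<psi> (\<lambda>m. x m + y m) = \<psi> x * \<psi> y" and \<psi>0: "\<psi> (\<lambda>_. 0) = 1"
    and "finite V"
  shows "\<psi> (trunc V x) = (\<Prod>m\<in>V. \<psi> (trunc {m} x))"
  using \<open>finite V\<close>
proof (induction V rule: finite_induct)
  case empty
  then show ?case using \<psi>0 by (simp add: trunc_def)
next
  case (insert m V)
  have "trunc (insert m V) x = (\<lambda>i. trunc {m} x i + trunc V x i)"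
    using insert.hyps(2) by (auto simp: trunc_def)
  then show ?case using insert hom by simp
qed

lemma characters_if_finite_dependence:
  fixes \<psi> :: "('m \<Rightarrow> 'a::ab_group_add) \<Rightarrow> complex"
  assumes hom: "\<And>x y. \<psi> (\<lambda>m. x m + y m) = \<psi> x * \<psi> y" and norm: "\<And>x. norm (\<psi> x) = 1"
    and W: "finite W" and dep: "\<And>x y. \<forall>m\<in>W. x m = y m \<Longrightarrow> \<psi> x = \<psi> y"
  shows "\<psi> \<in> characters"
proof -
  define c where "c m = (if m \<in> W then (\<lambda>a. \<psi> (trunc {m} (\<lambda>_. a))) else (\<lambda>_. 1))" for m
  have \<psi>0: "\<psi> (\<lambda>_. 0) = 1"
  proof -
    have "\<psi> (\<lambda>_. 0) * \<psi> (\<lambda>_. 0) = \<psi> (\<lambda>_. 0) * 1" "\<psi> (\<lambda>_. 0) \<noteq> 0"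
      using hom[of "\<lambda>_. 0" "\<lambda>_. 0"] norm[of "\<lambda>_. 0"] by auto
    then show ?thesis by simp
  qed
  have "group_char (c m)" for m
  proof (cases "m \<in> W")
    case True
    have "trunc {m} (\<lambda>_. a + b) = (\<lambda>i. trunc {m} (\<lambda>_. a) i + trunc {m} (\<lambda>_. b) i)" for a b :: 'a
      by (auto simp: trunc_def)
    then show ?thesis using True hom norm by (simp add: group_char_def c_def)
  qed (simp add: group_char_def c_def)
  moreover have supp: "char_supp c \<subseteq> W" by (auto simp: char_supp_def c_def)
  ultimately have cf: "char_family c" using W by (auto simp: char_family_def intro: finite_subset)
  have "\<psi> x = prod_char c x" for x
  proof -
    have "\<psi> x = \<psi> (trunc W x)" by (rule dep) (simp add: trunc_def)
    also have "\<dots> = (\<Prod>m\<in>W. \<psi> (trunc {m} x))" by (rule hom_trunc[OF hom \<psi>0 W])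
    also have "\<dots> = (\<Prod>m\<in>W. c m (x m))"
    proof (intro prod.cong refl)
      fix m assume "m \<in> W"
      have "trunc {m} x = trunc {m} (\<lambda>_. x m)" by (auto simp: trunc_def)
      then show "\<psi> (trunc {m} x) = c m (x m)" using \<open>m \<in> W\<close> by (simp add: c_def)
    qed
    also have "\<dots> = prod_char c x" using prod_char_superset[OF W supp] by simp
    finally show ?thesis .
  qed
  then have "\<psi> = prod_char c" by auto
  then show ?thesis using cf unfolding characters_def by blast
qed

lemma characters_comp_continuous_additive:
  fixes G :: "('m \<Rightarrow> 'a::{ab_group_add,finite}) \<Rightarrow> ('n \<Rightarrow> 'b::ab_group_add)"
  assumes cont: "continuous_map cfg_topology cfg_topology G"
    and add: "\<And>x y. G (\<lambda>m. x m + y m) = (\<lambda>n. G x n + G y n)" and ch: "ch \<in> characters"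
  shows "ch \<circ> G \<in> characters"
proof -
  obtain c where c: "char_family c" "ch = prod_char c" using ch unfolding characters_def by blast
  have "\<forall>n. \<exists>W. finite W \<and> (\<forall>x y. (\<forall>m\<in>W. x m = y m) \<longrightarrow> G x n = G y n)"
    using continuous_map_discrete_finite_dependence[OF continuous_map_coordinate[OF cont]] by blast
  then obtain V where V: "\<And>n. finite (V n)" "\<And>n x y. \<forall>m\<in>V n. x m = y m \<Longrightarrow> G x n = G y n"
    by metis
  show ?thesis
  proof (rule characters_if_finite_dependence)
    show "finite (\<Union>n\<in>char_supp c. V n)" using V(1) c(1) by (simp add: char_family_def)
    show "(ch \<circ> G) x = (ch \<circ> G) y" if "\<forall>m\<in>(\<Union>n\<in>char_supp c. V n). x m = y m" for x y
      using that V(2) c(2) by (auto intro!: prod_char_cong)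
  qed (use c prod_char_add norm_prod_char add in auto)
qed

lemma borel_measurable_characters:
  fixes ch :: "('m \<Rightarrow> 'a::{ab_group_add,finite}) \<Rightarrow> complex"
  assumes "ch \<in> characters"
  shows "ch \<in> borel_measurable cfg_space"
proof -
  obtain W where "finite W" "\<And>x y. \<forall>m\<in>W. x m = y m \<Longrightarrow> ch x = ch y"
    using characters_finite_dependence[OF assms] by blast
  then show ?thesis by (intro measurable_cfg_space_finite_dependence) auto
qed

lemma one_in_characters: "((\<lambda>_. 1) :: ('m \<Rightarrow> 'a::ab_group_add) \<Rightarrow> complex) \<in> characters"
proof -
  let ?c = "(\<lambda>_ _. 1) :: 'm \<Rightarrow> 'a \<Rightarrow> complex"
  have "char_family ?c" by (simp add: char_family_def char_supp_def group_char_def)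
  moreover have "prod_char ?c = (\<lambda>_. 1)" by (rule ext) (simp add: prod_char_def char_supp_def)
  ultimately show ?thesis unfolding characters_def by force
qed

lemma mult_in_characters:
  assumes "ch1 \<in> characters" "ch2 \<in> characters"
  shows "(\<lambda>x. ch1 x * ch2 x) \<in> characters"
proof -
  obtain W1 where W1: "finite W1" "\<And>x y. \<forall>m\<in>W1. x m = y m \<Longrightarrow> ch1 x = ch1 y"
    using characters_finite_dependence[OF assms(1)] by blast
  obtain W2 where W2: "finite W2" "\<And>x y. \<forall>m\<in>W2. x m = y m \<Longrightarrow> ch2 x = ch2 y"
    using characters_finite_dependence[OF assms(2)] by blast
  obtain c1 c2 where c: "char_family c1" "ch1 = prod_char c1" "char_family c2" "ch2 = prod_char c2"
    using assms unfolding characters_def by blast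
  show ?thesis
  proof (rule characters_if_finite_dependence[of _ "W1 \<union> W2"])
    show "ch1 x * ch2 x = ch1 y * ch2 y" if "\<forall>m\<in>W1 \<union> W2. x m = y m" for x y
      using that W1(2)[of x y] W2(2)[of x y] by simp
  qed (use c W1 W2 in \<open>simp_all add: prod_char_add norm_mult norm_prod_char mult_ac\<close>)
qed

lemma coordinate_in_characters:
  fixes \<phi> :: "'a::ab_group_add \<Rightarrow> complex" and m :: 'm
  assumes "group_char \<phi>"
  shows "(\<lambda>x. \<phi> (x m)) \<in> characters"
proof (rule characters_if_finite_dependence[of _ "{m}"])
  show "\<phi> (x m + y m) = \<phi> (x m) * \<phi> (y m)" "norm (\<phi> (x m)) = 1" for x y :: "'m \<Rightarrow> 'a"
    using assms by (simp_all add: group_char_def)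
qed auto

lemma product_prob_space_uniform:
  "product_prob_space (\<lambda>_::'m. uniform_count_measure (UNIV::'a::finite set))"
  by (simp add: product_prob_space_def product_sigma_finite_def prob_space_uniform_count_measure
      prob_space_imp_sigma_finite product_prob_space_axioms_def)

lemma prob_space_haar: "prob_space (haar :: ('m \<Rightarrow> 'a::finite) measure)"
proof -
  interpret product_prob_space "\<lambda>_::'m. uniform_count_measure (UNIV::'a set)" UNIV
    by (rule product_prob_space_uniform)
  show ?thesis unfolding haar_def by (rule P.prob_space_axioms)
qed

lemma sets_haar: "sets (haar :: ('m \<Rightarrow> 'a::finite) measure) = sets cfg_space"
  unfolding haar_def cfg_space_def
  by (rule sets_PiM_cong) (auto simp: sets_uniform_count_measure)

lemma integral_haar_prod_char:
  fixes c :: "'m \<Rightarrow> 'a::{ab_group_add,finite} \<Rightarrow> complex"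
  assumes "char_family c"
  shows "integral\<^sup>L haar (prod_char c) = (\<Prod>m\<in>char_supp c. integral\<^sup>L (uniform_count_measure UNIV) (c m))"
proof -
  let ?U = "\<lambda>_::'m. uniform_count_measure (UNIV::'a set)"
  let ?J = "char_supp c"
  interpret product_prob_space ?U UNIV by (rule product_prob_space_uniform)
  have J: "finite ?J" using assms by (simp add: char_family_def)
  let ?g = "\<lambda>y. \<Prod>m\<in>?J. c m (y m)"
  have measurable_U: "f \<in> borel_measurable (?U m)" for f :: "'a \<Rightarrow> complex" and m
    by (simp add: measurable_cong_sets[OF sets_uniform_count_measure_count_space refl])
  have integrable_U: "integrable (?U m) f" for f :: "'a \<Rightarrow> complex" and m
    by (rule M.integrable_const_bound[where B="Max (range (\<lambda>a. norm (f a)))"])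
      (auto intro: measurable_U)
  have "?g \<in> borel_measurable (Pi\<^sub>M ?J ?U)"
  proof (intro borel_measurable_prod)
    fix m assume "m \<in> ?J"
    then have "(\<lambda>y. y m) \<in> measurable (Pi\<^sub>M ?J ?U) (?U m)" by (rule measurable_component_singleton)
    then show "(\<lambda>y. c m (y m)) \<in> borel_measurable (Pi\<^sub>M ?J ?U)"
      using measurable_U by (rule measurable_compose)
  qed
  then have "integral\<^sup>L haar (prod_char c) = integral\<^sup>L (distr (Pi\<^sub>M UNIV ?U) (Pi\<^sub>M ?J ?U) (\<lambda>x. restrict x ?J)) ?g"
    unfolding haar_def prod_char_def
    by (subst integral_distr[OF measurable_restrict_subset]) (auto intro!: Bochner_Integration.integral_cong)
  also have "distr (Pi\<^sub>M UNIV ?U) (Pi\<^sub>M ?J ?U) (\<lambda>x. restrict x ?J) = Pi\<^sub>M ?J ?U"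
    using J by (intro distr_PiM_restrict_finite) auto
  also have "integral\<^sup>L (Pi\<^sub>M ?J ?U) ?g = (\<Prod>m\<in>?J. integral\<^sup>L (?U m) (c m))"
    by (rule product_integral_prod[OF J integrable_U])
  finally show ?thesis .
qed

lemma integral_haar_characters:
  fixes ch :: "('m \<Rightarrow> 'a::{ab_group_add,finite}) \<Rightarrow> complex"
  assumes ch: "ch \<in> characters"
  shows "integral\<^sup>L haar ch = (if ch = (\<lambda>_. 1) then 1 else 0)"
proof (cases "ch = (\<lambda>_. 1)")
  case True
  interpret prob_space "haar :: ('m \<Rightarrow> 'a) measure" by (rule prob_space_haar)
  show ?thesis using True by (simp add: prob_space)
next
  case False
  obtain c where c: "char_family c" "ch = prod_char c" using ch unfolding characters_def by blast
  then obtain m where m: "m \<in> char_supp c"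
    using False by (fastforce simp: prod_char_def)
  then have "c m \<noteq> (\<lambda>_. 1)" "group_char (c m)" using c by (auto simp: char_supp_def char_family_def)
  then have "integral\<^sup>L (uniform_count_measure UNIV) (c m) = 0"
    by (simp add: uniform_count_measure_def lebesgue_integral_point_measure_finite
        sum_group_char_eq_0 flip: scaleR_sum_right)
  then have "(\<Prod>m\<in>char_supp c. integral\<^sup>L (uniform_count_measure UNIV) (c m)) = 0"
    using m c(1) by (intro prod_zero) (auto simp: char_family_def)
  then show ?thesis using integral_haar_prod_char[OF c(1)] c False by simp
qed

section \<open>Weak* convergence to Haar measure\<close>

text \<open>A countable family of characters whose linear span contains every function of finitely
  many coordinates. Indexing by lists makes it countable, which the diagonal argument for
  convergence in density needs.\<close>

primrec list_char :: "('m \<times> 'a::{ab_group_add,finite}) list \<Rightarrow> ('m \<Rightarrow> 'a) \<Rightarrow> complex" where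
  "list_char [] x = 1"
| "list_char (p # l) x = separating_char (snd p) (x (fst p)) * list_char l x"

lemma list_char_append: "list_char (l1 @ l2) x = list_char l1 x * list_char l2 x"
  by (induction l1) auto

lemma list_char_in_characters: "list_char l \<in> characters"
proof (induction l)
  case Nil
  then show ?case using one_in_characters by (simp add: fun_eq_iff[symmetric])
next
  case (Cons p l)
  then show ?case
    using mult_in_characters[OF coordinate_in_characters[OF separating_char(1)] Cons] by simp
qed

inductive list_char_span :: "(('m \<Rightarrow> 'a::{ab_group_add,finite}) \<Rightarrow> complex) \<Rightarrow> bool" where
  list_char: "list_char_span (list_char l)"
| zero: "list_char_span (\<lambda>_. 0)"
| add: "list_char_span f \<Longrightarrow> list_char_span g \<Longrightarrow> list_char_span (\<lambda>x. f x + g x)"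
| scale: "list_char_span f \<Longrightarrow> list_char_span (\<lambda>x. c * f x)"

lemma list_char_span_const: "list_char_span (\<lambda>_. c)"
  using list_char_span.scale[OF list_char_span.list_char[of "[]"], of c] by simp

lemma list_char_span_mult_list_char:
  "list_char_span g \<Longrightarrow> list_char_span (\<lambda>x. list_char l x * g x)"
proof (induction rule: list_char_span.induct)
  case (list_char l')
  have "(\<lambda>x. list_char l x * list_char l' x) = list_char (l @ l')"
    by (simp add: fun_eq_iff list_char_append)
  then show ?case by (simp add: list_char_span.list_char)
next
  case zero
  then show ?case using list_char_span.zero by simp
next
  case (add f g)
  then show ?case using list_char_span.add[OF add.IH] by (simp add: distrib_left)
next
  case (scale f c)
  then show ?case using list_char_span.scale[OF scale.IH, of c] by (simp add: mult.left_commute)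
qed

lemma list_char_span_mult:
  "list_char_span f \<Longrightarrow> list_char_span g \<Longrightarrow> list_char_span (\<lambda>x. f x * g x)"
proof (induction rule: list_char_span.induct)
  case (list_char l)
  then show ?case by (rule list_char_span_mult_list_char)
next
  case zero
  then show ?case using list_char_span.zero by simp
next
  case (add f1 f2)
  then show ?case using list_char_span.add[OF add.IH] by (simp add: distrib_right)
next
  case (scale f c)
  then show ?case using list_char_span.scale[OF scale.IH, of c] by (simp add: mult.assoc)
qed

lemma list_char_span_prod:
  "finite S \<Longrightarrow> (\<And>i. i \<in> S \<Longrightarrow> list_char_span (f i)) \<Longrightarrow> list_char_span (\<lambda>x. \<Prod>i\<in>S. f i x)"
proof (induction S rule: finite_induct)
  case empty
  then show ?case using list_char_span_const[of 1] by simp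
next
  case (insert i S)
  then show ?case using list_char_span_mult[of "f i" "\<lambda>x. \<Prod>i\<in>S. f i x"] by simp
qed

lemma list_char_span_sum:
  "finite S \<Longrightarrow> (\<And>i. i \<in> S \<Longrightarrow> list_char_span (f i)) \<Longrightarrow> list_char_span (\<lambda>x. \<Sum>i\<in>S. f i x)"
proof (induction S rule: finite_induct)
  case empty
  then show ?case using list_char_span.zero by simp
next
  case (insert i S)
  then show ?case using list_char_span.add[of "f i" "\<lambda>x. \<Sum>i\<in>S. f i x"] by simp
qed

text \<open>The indicator of \<open>x m = a\<close> is the product over \<open>y \<noteq> 0\<close> of
  \<open>(\<phi>\<^sub>y (x m - a) - \<phi>\<^sub>y y) / (1 - \<phi>\<^sub>y y)\<close>: every factor is \<open>1\<close> if \<open>x m = a\<close>,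
  and the factor \<open>y = x m - a\<close> vanishes otherwise.\<close>

lemma list_char_span_coordinate_indicator:
  fixes m :: 'm and a :: "'a::{ab_group_add,finite}"
  shows "list_char_span (\<lambda>x::'m \<Rightarrow> 'a. if x m = a then 1 else 0)"
proof -
  let ?S = "UNIV - {0::'a}"
  define factor where "factor y x = (separating_char y (x m - a) - separating_char y y)
      / (1 - separating_char y y)" for y and x :: "'m \<Rightarrow> 'a"
  have "list_char_span (factor y)" for y
  proof -
    have "separating_char y (x m - a) = separating_char y (x m) * separating_char y (- a)"
      for x :: "'m \<Rightarrow> 'a"
      using separating_char(1)[of y] unfolding group_char_def by (metis diff_conv_add_uminus)
    then have "factor y = (\<lambda>x. separating_char y (- a) / (1 - separating_char y y) * list_char [(m, y)] x
        + (- separating_char y y / (1 - separating_char y y)) * list_char [] x)"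
      by (simp add: fun_eq_iff factor_def diff_divide_distrib mult.commute)
    then show ?thesis
      by (simp only:) (intro list_char_span.add list_char_span.scale list_char_span.list_char)
  qed
  then have "list_char_span (\<lambda>x. \<Prod>y\<in>?S. factor y x)" by (intro list_char_span_prod) auto
  moreover have "(\<Prod>y\<in>?S. factor y x) = (if x m = a then 1 else 0)" for x
  proof (cases "x m = a")
    case True
    have "factor y x = 1" if "y \<in> ?S" for y
      using True separating_char(2)[of y] that by (simp add: factor_def group_char_zero[OF separating_char(1)])
    then show ?thesis using True by simp
  next
    case False
    then have "x m - a \<in> ?S" "factor (x m - a) x = 0" by (simp_all add: factor_def)
    then have "(\<Prod>y\<in>?S. factor y x) = 0" by (intro prod_zero) auto
    then show ?thesis using False by simp
  qed
  ultimately show ?thesis by simp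
qed

lemma list_char_span_finite_dependence:
  fixes g :: "('m \<Rightarrow> 'a::{ab_group_add,finite}) \<Rightarrow> complex"
  assumes W: "finite W" and dep: "\<And>x y. \<forall>m\<in>W. x m = y m \<Longrightarrow> g x = g y"
  shows "list_char_span g"
proof -
  let ?T = "range (trunc W :: ('m \<Rightarrow> 'a) \<Rightarrow> _)"
  let ?ind = "\<lambda>t x. \<Prod>m\<in>W. if x m = t m then 1 else (0::complex)"
  have T: "finite ?T" by (rule finite_range_trunc[OF W])
  have "list_char_span (\<lambda>x. \<Sum>t\<in>?T. g t * ?ind t x)"
    using T W by (intro list_char_span_sum list_char_span_mult list_char_span_const
        list_char_span_prod list_char_span_coordinate_indicator) auto
  moreover have "(\<Sum>t\<in>?T. g t * ?ind t x) = g x" for x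
  proof -
    have "?ind t x = 0" if t: "t \<in> ?T - {trunc W x}" for t
    proof -
      obtain z where z: "t = trunc W z" "t \<noteq> trunc W x" using t by blast
      then obtain m where "t m \<noteq> trunc W x m" by auto
      then have "m \<in> W" "x m \<noteq> t m" using z(1) by (auto simp: trunc_def split: if_splits)
      then show ?thesis using W by (intro prod_zero) auto
    qed
    then have "(\<Sum>t\<in>?T. g t * ?ind t x) = g (trunc W x) * ?ind (trunc W x) x"
      using T by (subst sum.remove[of _ "trunc W x"]) auto
    also have "\<dots> = g x" using dep[of "trunc W x" x] by (simp add: trunc_def)
    finally show ?thesis .
  qed
  ultimately show ?thesis by simp
qed

lemma integrable_bounded_cfg:
  fixes h :: "('m \<Rightarrow> 'a::{ab_group_add,finite}) \<Rightarrow> 'b::{banach,second_countable_topology}"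
  assumes "prob_space M" "sets M = sets cfg_space"
    and "h \<in> borel_measurable cfg_space" "\<And>x. norm (h x) \<le> B"
  shows "integrable M h"
proof -
  interpret prob_space M by fact
  have "h \<in> borel_measurable M" using assms(3) by (simp add: measurable_cong_sets[OF assms(2) refl])
  then show ?thesis by (intro integrable_const_bound[where B = B]) (auto simp: assms(4))
qed

lemma (in prob_space) integral_uniformly_close:
  fixes f g :: "'a \<Rightarrow> real"
  assumes "integrable M f" "integrable M g" "\<And>x. \<bar>f x - g x\<bar> \<le> e"
  shows "\<bar>integral\<^sup>L M f - integral\<^sup>L M g\<bar> \<le> e"
proof -
  have "\<bar>integral\<^sup>L M f - integral\<^sup>L M g\<bar> = \<bar>integral\<^sup>L M (\<lambda>x. f x - g x)\<bar>"
    using assms by simp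
  also have "\<dots> \<le> integral\<^sup>L M (\<lambda>x. \<bar>f x - g x\<bar>)" by (rule integral_abs_bound)
  also have "\<dots> \<le> e" using assms by (intro integral_le_const) auto
  finally show ?thesis .
qed

lemma list_char_span_bounded_measurable:
  fixes h :: "('m \<Rightarrow> 'a::{ab_group_add,finite}) \<Rightarrow> complex"
  shows "list_char_span h \<Longrightarrow> h \<in> borel_measurable cfg_space \<and> (\<exists>B. \<forall>x. norm (h x) \<le> B)"
proof (induction rule: list_char_span.induct)
  case (list_char l)
  then show ?case
    using borel_measurable_characters characters_norm list_char_in_characters by (metis order_refl)
next
  case zero
  then show ?case by auto
next
  case (add f g)
  then obtain B1 B2 where "\<forall>x. norm (f x) \<le> B1" "\<forall>x. norm (g x) \<le> B2" by blast
  then have "\<forall>x. norm (f x + g x) \<le> B1 + B2" by (metis add_mono norm_triangle_le)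
  then show ?case using add.IH by auto
next
  case (scale f c)
  then obtain B where "\<forall>x. norm (f x) \<le> B" by blast
  then have "\<forall>x. norm (c * f x) \<le> norm c * B" by (simp add: norm_mult mult_left_mono)
  then show ?case using scale.IH by auto
qed

lemma integrable_list_char_span:
  "list_char_span h \<Longrightarrow> prob_space M \<Longrightarrow> sets M = sets cfg_space \<Longrightarrow> integrable M h"
  using list_char_span_bounded_measurable integrable_bounded_cfg by metis

lemma tendsto_integral_list_char_span:
  fixes \<nu> :: "'i \<Rightarrow> ('m \<Rightarrow> 'a::{ab_group_add,finite}) measure"
  assumes P: "\<And>i. prob_space (\<nu> i)" and S: "\<And>i. sets (\<nu> i) = sets cfg_space"
    and conv: "\<And>l. ((\<lambda>i. integral\<^sup>L (\<nu> i) (list_char l)) \<longlongrightarrow> integral\<^sup>L haar (list_char l)) G"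
  shows "list_char_span h \<Longrightarrow> ((\<lambda>i. integral\<^sup>L (\<nu> i) h) \<longlongrightarrow> integral\<^sup>L haar h) G"
proof (induction rule: list_char_span.induct)
  case (list_char l)
  then show ?case by (rule conv)
next
  case zero
  then show ?case by simp
next
  case (add f g)
  have int_add: "integral\<^sup>L M (\<lambda>x. f x + g x) = integral\<^sup>L M f + integral\<^sup>L M g"
    if "prob_space M" "sets M = sets cfg_space" for M
    using that add.hyps by (intro Bochner_Integration.integral_add integrable_list_char_span)
  show ?case
    using tendsto_add[OF add.IH] int_add[OF P S] int_add[OF prob_space_haar sets_haar] by simp
next
  case (scale f c)
  then show ?case by (simp add: tendsto_mult_left)
qed

lemma bounded_continuous_map_cfg:
  fixes f :: "('m \<Rightarrow> 'a::finite) \<Rightarrow> real"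
  assumes "continuous_map cfg_topology euclideanreal f"
  obtains B where "\<And>x. \<bar>f x\<bar> \<le> B"
proof -
  have "compactin euclideanreal (f ` topspace cfg_topology)"
    using image_compactin[OF _ assms] compact_space_cfg_topology by (simp add: compact_space_def)
  then have "bounded (range f)" by (simp add: compact_imp_bounded)
  then show ?thesis using that by (auto simp: bounded_iff)
qed

lemma continuous_map_trunc_approx:
  fixes f :: "('m \<Rightarrow> 'a::{zero,finite}) \<Rightarrow> real"
  assumes "continuous_map cfg_topology euclideanreal f" "e > 0"
  obtains W where "finite W" "\<And>x. \<bar>f x - f (trunc W x)\<bar> < e"
proof -
  obtain W where "finite W" "\<forall>x y. (\<forall>m\<in>W. x m = y m) \<longrightarrow> \<bar>f x - f y\<bar> < e"
    using continuous_map_uniformly_cylindrical[OF assms] by blast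
  then show ?thesis using that by (simp add: trunc_def)
qed

lemma borel_measurable_continuous_map_cfg:
  fixes f :: "('m \<Rightarrow> 'a::{zero,finite}) \<Rightarrow> real"
  assumes f: "continuous_map cfg_topology euclideanreal f"
  shows "f \<in> borel_measurable cfg_space"
proof -
  have "\<exists>W. finite W \<and> (\<forall>x. \<bar>f x - f (trunc W x)\<bar> < 1 / Suc n)" for n
    using continuous_map_trunc_approx[OF f, of "1 / Suc n"] by auto
  then obtain W where W: "\<And>n. finite (W n)" "\<And>n x. \<bar>f x - f (trunc (W n) x)\<bar> < 1 / Suc n"
    by metis
  show ?thesis
  proof (rule borel_measurable_LIMSEQ_metric)
    show "(\<lambda>x. f (trunc (W n) x)) \<in> borel_measurable cfg_space" for n
      using W(1) by (intro measurable_cfg_space_finite_dependence[of "W n"])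
        (auto simp: trunc_def intro!: arg_cong[where f = f])
    show "(\<lambda>n. f (trunc (W n) x)) \<longlonglongrightarrow> f x" for x
    proof (rule LIMSEQ_I)
      fix r :: real assume "r > 0"
      then obtain N where N: "1 / Suc N < r" using nat_approx_posE by blast
      have "\<bar>f (trunc (W n) x) - f x\<bar> < r" if "n \<ge> N" for n
      proof -
        have "1 / real (Suc n) \<le> 1 / Suc N" using that by (simp add: frac_le)
        then show ?thesis using W(2)[of x n] N by linarith
      qed
      then show "\<exists>N. \<forall>n\<ge>N. norm (f (trunc (W n) x) - f x) < r" by auto
    qed
  qed
qed

text \<open>A continuous function is uniformly close to a function of finitely many coordinates,
  which lies in the span of the characters \<open>list_char l\<close>.\<close>

lemma weak_star_conv_haar_if_list_char:
  fixes \<nu> :: "'i \<Rightarrow> ('m \<Rightarrow> 'a::{ab_group_add,finite}) measure"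
  assumes P: "\<And>i. prob_space (\<nu> i)" and S: "\<And>i. sets (\<nu> i) = sets cfg_space"
    and conv: "\<And>l. ((\<lambda>i. integral\<^sup>L (\<nu> i) (list_char l)) \<longlongrightarrow> integral\<^sup>L haar (list_char l)) G"
  shows "weak_star_conv \<nu> haar G"
  unfolding weak_star_conv_def
proof (intro allI impI tendstoI)
  fix f :: "('m \<Rightarrow> 'a) \<Rightarrow> real" and e :: real
  assume f: "continuous_map cfg_topology euclideanreal f" and "e > 0"
  obtain B where B: "\<And>x. \<bar>f x\<bar> \<le> B" using bounded_continuous_map_cfg[OF f] by blast
  obtain W where W: "finite W" "\<And>x. \<bar>f x - f (trunc W x)\<bar> < e / 3"
    using continuous_map_trunc_approx[OF f, of "e / 3"] \<open>e > 0\<close> by auto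
  define g where "g x = f (trunc W x)" for x
  have g_dep: "g x = g y" if "\<forall>m\<in>W. x m = y m" for x y
    using that by (simp add: g_def trunc_def cong: if_cong)
  have fm: "f \<in> borel_measurable cfg_space" by (rule borel_measurable_continuous_map_cfg[OF f])
  have gm: "g \<in> borel_measurable cfg_space"
    using W(1) g_dep by (intro measurable_cfg_space_finite_dependence) auto
  have close: "\<bar>integral\<^sup>L M f - integral\<^sup>L M g\<bar> \<le> e / 3"
    if "prob_space M" "sets M = sets cfg_space" for M
  proof -
    interpret prob_space M by fact
    show ?thesis
      using that W(2) B g_def
      by (intro integral_uniformly_close integrable_bounded_cfg[OF that fm, of B]
          integrable_bounded_cfg[OF that gm, of B]) (auto intro: less_imp_le)
  qed
  have "list_char_span (\<lambda>x. complex_of_real (g x))"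
    using W(1) g_dep by (intro list_char_span_finite_dependence) auto
  from tendsto_integral_list_char_span[OF P S conv this]
  have "((\<lambda>i. integral\<^sup>L (\<nu> i) g) \<longlongrightarrow> integral\<^sup>L haar g) G"
    using tendsto_Re by fastforce
  then have "\<forall>\<^sub>F i in G. dist (integral\<^sup>L (\<nu> i) g) (integral\<^sup>L haar g) < e / 3"
    using \<open>e > 0\<close> by (intro tendstoD) auto
  then show "\<forall>\<^sub>F i in G. dist (integral\<^sup>L (\<nu> i) f) (integral\<^sup>L haar f) < e"
  proof (rule eventually_mono)
    fix i assume "dist (integral\<^sup>L (\<nu> i) g) (integral\<^sup>L haar g) < e / 3"
    with close[OF P S, of i] close[OF prob_space_haar sets_haar]
    show "dist (integral\<^sup>L (\<nu> i) f) (integral\<^sup>L haar f) < e"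
      unfolding dist_real_def by linarith
  qed
qed

section \<open>Sets of density one and Cesaro means\<close>

definition rel_density :: "nat set \<Rightarrow> nat \<Rightarrow> real" where
  "rel_density J N = real (card (J \<inter> {1..N})) / real N"

lemma density_one_iff: "density_one J \<longleftrightarrow> rel_density J \<longlonglongrightarrow> 1"
  by (simp add: density_one_def rel_density_def[abs_def])

lemma rel_density_le_1: "rel_density J N \<le> 1"
proof (cases "N = 0")
  case False
  have "card (J \<inter> {1..N}) \<le> card {1..N}" by (intro card_mono) auto
  then show ?thesis using False by (simp add: rel_density_def)
qed (simp add: rel_density_def)

lemma rel_density_mono: "A \<inter> {1..N} \<subseteq> B \<Longrightarrow> rel_density A N \<le> rel_density B N"
  unfolding rel_density_def by (intro divide_right_mono) (auto intro: card_mono)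

lemma rel_density_Int: "rel_density A N + rel_density B N - 1 \<le> rel_density (A \<inter> B) N"
proof (cases "N = 0")
  case False
  let ?X = "A \<inter> {1..N}" and ?Y = "B \<inter> {1..N}"
  have "?X \<inter> ?Y = (A \<inter> B) \<inter> {1..N}" by auto
  then have "card (?X \<union> ?Y) + card ((A \<inter> B) \<inter> {1..N}) = card ?X + card ?Y"
    using card_Un_Int[of ?X ?Y] by simp
  moreover have "card (?X \<union> ?Y) \<le> N" using card_mono[of "{1..N}" "?X \<union> ?Y"] by auto
  ultimately have "card ?X + card ?Y \<le> N + card ((A \<inter> B) \<inter> {1..N})" by linarith
  then have "real (card ?X) + real (card ?Y) - real N \<le> real (card ((A \<inter> B) \<inter> {1..N}))"
    by (simp add: of_nat_add[symmetric] del: of_nat_add)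
  then have "(real (card ?X) + real (card ?Y) - real N) / real N \<le> real (card ((A \<inter> B) \<inter> {1..N})) / real N"
    by (intro divide_right_mono) auto
  then show ?thesis using False by (simp add: rel_density_def diff_divide_distrib add_divide_distrib)
qed (simp add: rel_density_def)

lemma density_one_Int: "density_one A \<Longrightarrow> density_one B \<Longrightarrow> density_one (A \<inter> B)"
  unfolding density_one_iff
proof -
  assume "rel_density A \<longlonglongrightarrow> 1" "rel_density B \<longlonglongrightarrow> 1"
  then have lower: "(\<lambda>N. rel_density A N + rel_density B N - 1) \<longlonglongrightarrow> 1"
    by (auto intro: tendsto_eq_intros)
  show "rel_density (A \<inter> B) \<longlonglongrightarrow> 1"
    by (rule tendsto_sandwich[OF _ _ lower tendsto_const]) (auto simp: rel_density_Int rel_density_le_1)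
qed

lemma density_one_UNIV: "density_one UNIV"
  unfolding density_one_iff
  by (intro tendsto_eventually eventually_sequentiallyI[of 1]) (simp add: rel_density_def)

text \<open>Diagonal argument: beyond the threshold \<open>M k + k\<close>, the set \<open>J\<close> follows \<open>I k\<close>, where \<open>M k\<close>
  is chosen so that \<open>I k\<close> has relative density above \<open>1 - 1 / (k + 1)\<close> from \<open>M k\<close> on.\<close>

lemma density_one_decseq_diagonal:
  assumes dec: "decseq I" and dens: "\<And>k. density_one (I k)"
  obtains J where "density_one J" "\<And>k. finite (J - I k)"
proof -
  have "\<exists>M. \<forall>N\<ge>M. 1 - 1 / Suc k < rel_density (I k) N" for k
  proof -
    have "\<forall>\<^sub>F N in sequentially. dist (rel_density (I k) N) 1 < 1 / Suc k"
      using dens[of k] unfolding density_one_iff by (rule tendstoD) simp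
    then obtain M where "\<forall>N\<ge>M. \<bar>rel_density (I k) N - 1\<bar> < 1 / Suc k"
      unfolding eventually_sequentially dist_real_def by blast
    then show ?thesis by (intro exI[of _ M]) (auto simp: abs_less_iff)
  qed
  then obtain M where M: "\<forall>k. \<forall>N\<ge>M k. 1 - 1 / Suc k < rel_density (I k) N"
    using choice[of "\<lambda>k M. \<forall>N\<ge>M. 1 - 1 / Suc k < rel_density (I k) N"] by blast
  define J where "J = {j. \<forall>k. M k + k \<le> j \<longrightarrow> j \<in> I k}"
  have "J - I k \<subseteq> {..<M k + k}" for k by (auto simp: J_def not_less[symmetric])
  then have "finite (J - I k)" for k using finite_subset by blast
  moreover have "rel_density J \<longlonglongrightarrow> 1"
  proof (rule LIMSEQ_I)
    fix r :: real assume "r > 0"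
    then obtain K where K: "1 / Suc K < r" using nat_approx_posE by blast
    have "\<bar>rel_density J N - 1\<bar> < r" if N: "M K + K \<le> N" for N
    proof -
      let ?S = "{k. M k + k \<le> N}"
      define k where "k = Max ?S"
      have fin: "finite ?S" by (rule finite_subset[of _ "{..N}"]) auto
      then have "K \<le> k" "M k + k \<le> N" using N Max_in[of ?S] by (auto simp: k_def)
      have "I k \<inter> {1..N} \<subseteq> J"
      proof
        fix j assume j: "j \<in> I k \<inter> {1..N}"
        have "j \<in> I k'" if "M k' + k' \<le> j" for k'
        proof -
          have "k' \<le> k" using that j fin by (auto simp: k_def intro: Max_ge)
          then show ?thesis using j dec by (auto simp: decseq_def)
        qed
        then show "j \<in> J" by (simp add: J_def)
      qed
      then have "rel_density (I k) N \<le> rel_density J N" by (rule rel_density_mono)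
      moreover have "1 - 1 / Suc k < rel_density (I k) N" using M \<open>M k + k \<le> N\<close> by auto
      moreover have "1 / real (Suc k) \<le> 1 / Suc K" using \<open>K \<le> k\<close> by (simp add: frac_le)
      ultimately show ?thesis using K rel_density_le_1[of J N] by linarith
    qed
    then show "\<exists>N0. \<forall>N\<ge>N0. norm (rel_density J N - 1) < r" by auto
  qed
  ultimately show ?thesis using that by (simp add: density_one_iff)
qed

lemma density_one_countable_diagonal:
  fixes J :: "'i::countable \<Rightarrow> nat set"
  assumes dens: "\<And>i. density_one (J i)"
  obtains J' where "density_one J'" "\<And>i. finite (J' - J i)"
proof -
  define I where "I k = (\<Inter>i\<le>k. J (from_nat i))" for k
  have "decseq I" by (auto simp: decseq_def I_def)
  moreover have "density_one (I k)" for k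
  proof (induction k)
    case (Suc k)
    have "I (Suc k) = J (from_nat (Suc k)) \<inter> I k" by (auto simp: I_def atMost_Suc)
    then show ?case using Suc dens density_one_Int by simp
  qed (simp add: I_def dens)
  ultimately obtain J' where J': "density_one J'" "\<And>k. finite (J' - I k)"
    using density_one_decseq_diagonal by blast
  have "J' - J i \<subseteq> J' - I (to_nat i)" for i by (auto simp: I_def)
  then show ?thesis using that J' finite_subset by blast
qed

lemma sequentially_inf_principal_mono:
  assumes "finite (J - J')"
  shows "sequentially \<sqinter> principal J \<le> sequentially \<sqinter> principal J'"
proof -
  obtain N where "J - J' \<subseteq> {..<N}" using finite_nat_bounded[OF assms] by blast
  then have "\<forall>\<^sub>F j in sequentially \<sqinter> principal J. j \<in> J'"
    unfolding eventually_inf_principal eventually_sequentially by (intro exI[of _ N]) auto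
  then show ?thesis by (simp add: le_principal inf.coboundedI1)
qed

lemma cesaro_mean_tendsto_0:
  fixes b :: "nat \<Rightarrow> real"
  assumes "b \<longlonglongrightarrow> 0"
  shows "(\<lambda>N. (\<Sum>n=1..N. b n) / N) \<longlonglongrightarrow> 0"
proof (rule LIMSEQ_I)
  fix r :: real assume "r > 0"
  then obtain K where K: "\<And>n. n \<ge> K \<Longrightarrow> \<bar>b n\<bar> < r / 2"
    using LIMSEQ_D[OF assms, of "r / 2"] by auto
  define S where "S = (\<Sum>n<K. \<bar>b n\<bar>)"
  obtain N0 :: nat where N0: "2 * S / r < N0" using reals_Archimedean2 by blast
  have "norm ((\<Sum>n=1..N. b n) / N - 0) < r" if N: "max 1 N0 \<le> N" for N
  proof -
    have "\<bar>\<Sum>n=1..N. b n\<bar> \<le> (\<Sum>n=1..N. \<bar>b n\<bar>)" by (rule sum_abs)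
    also have "\<dots> \<le> (\<Sum>n=1..N. (if n \<in> {..<K} then \<bar>b n\<bar> else 0) + r / 2)"
      using K \<open>r > 0\<close> by (intro sum_mono) (auto simp: less_imp_le not_less)
    also have "\<dots> = (\<Sum>n\<in>{1..N} \<inter> {..<K}. \<bar>b n\<bar>) + N * (r / 2)"
      by (simp add: sum.distrib sum.inter_restrict)
    also have "(\<Sum>n\<in>{1..N} \<inter> {..<K}. \<bar>b n\<bar>) \<le> S"
      unfolding S_def by (intro sum_mono2) auto
    also have "S < N * (r / 2)"
    proof -
      have "2 * S < r * N0" using N0 \<open>r > 0\<close> by (simp add: field_simps)
      also have "\<dots> \<le> r * N" using N \<open>r > 0\<close> by simp
      finally show ?thesis by (simp add: mult.commute)
    qed
    finally have "\<bar>\<Sum>n=1..N. b n\<bar> < N * r" by (simp add: mult.commute)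
    then show ?thesis using N by (simp add: field_simps)
  qed
  then show "\<exists>N0. \<forall>N\<ge>N0. norm ((\<Sum>n=1..N. b n) / N - 0) < r" by blast
qed

lemma cesaro_mean_outside_density_one:
  fixes c :: "nat \<Rightarrow> real"
  assumes J: "density_one J" and zero: "\<And>n. n \<in> J \<Longrightarrow> c n = 0" and bound: "\<And>n. \<bar>c n\<bar> \<le> C"
  shows "(\<lambda>N. (\<Sum>n=1..N. c n) / N) \<longlonglongrightarrow> 0"
proof (rule Lim_null_comparison)
  have "norm ((\<Sum>n=1..N. c n) / N) \<le> C * (1 - rel_density J N)" if "N \<ge> 1" for N
  proof -
    have "\<bar>\<Sum>n=1..N. c n\<bar> = \<bar>\<Sum>n\<in>{1..N} - J. c n\<bar>"
      using zero by (intro arg_cong[where f = abs] sum.mono_neutral_right) auto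
    also have "\<dots> \<le> (\<Sum>n\<in>{1..N} - J. \<bar>c n\<bar>)" by (rule sum_abs)
    also have "\<dots> \<le> card ({1..N} - J) * C" using bound by (intro sum_bounded_above) auto
    also have "card ({1..N} - J) = N - card (J \<inter> {1..N})"
      by (simp add: card_Diff_subset_Int Int_commute)
    finally show ?thesis
      using that card_mono[of "{1..N}" "J \<inter> {1..N}"]
      by (simp add: rel_density_def of_nat_diff field_simps)
  qed
  then show "\<forall>\<^sub>F N in sequentially. norm ((\<Sum>n=1..N. c n) / N) \<le> C * (1 - rel_density J N)"
    by (intro eventually_sequentiallyI[of 1]) auto
  have "(\<lambda>N. C * (1 - rel_density J N)) \<longlonglongrightarrow> C * (1 - 1)"
    using J unfolding density_one_iff by (intro tendsto_mult_left tendsto_diff tendsto_const)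
  then show "(\<lambda>N. C * (1 - rel_density J N)) \<longlonglongrightarrow> 0" by simp
qed

lemma cesaro_mean_density_one:
  fixes a :: "nat \<Rightarrow> real"
  assumes J: "density_one J" and lim: "(a \<longlongrightarrow> L) (sequentially \<sqinter> principal J)"
    and bound: "\<And>n. \<bar>a n\<bar> \<le> B"
  shows "(\<lambda>N. (\<Sum>n=1..N. a n) / N) \<longlonglongrightarrow> L"
proof -
  define b where "b n = (if n \<in> J then a n - L else 0)" for n
  define c where "c n = (if n \<in> J then 0 else a n - L)" for n
  have b_lim: "b \<longlonglongrightarrow> 0"
  proof (rule LIMSEQ_I)
    fix r :: real assume "r > 0"
    with lim have "\<forall>\<^sub>F n in sequentially \<sqinter> principal J. dist (a n) L < r" by (rule tendstoD)
    then show "\<exists>N0. \<forall>n\<ge>N0. norm (b n - 0) < r"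
      unfolding eventually_inf_principal eventually_sequentially
      using \<open>r > 0\<close> by (auto simp: b_def dist_real_def)
  qed
  have c_mean: "(\<lambda>N. (\<Sum>n=1..N. c n) / N) \<longlonglongrightarrow> 0"
  proof (rule cesaro_mean_outside_density_one[OF J])
    show "\<bar>c n\<bar> \<le> B + \<bar>L\<bar>" for n using bound[of n] abs_triangle_ineq4[of "a n" L] by (simp add: c_def)
  qed (simp add: c_def)
  have "(\<lambda>N. (\<Sum>n=1..N. b n) / N + (\<Sum>n=1..N. c n) / N + L) \<longlonglongrightarrow> 0 + 0 + L"
    using cesaro_mean_tendsto_0[OF b_lim] c_mean by (intro tendsto_add tendsto_const)
  moreover have "(\<Sum>n=1..N. a n) / N = (\<Sum>n=1..N. b n) / N + (\<Sum>n=1..N. c n) / N + L" if "N \<ge> 1" for N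
  proof -
    have "(\<Sum>n=1..N. a n) = (\<Sum>n=1..N. b n + c n + L)" by (intro sum.cong) (auto simp: b_def c_def)
    then show ?thesis using that by (simp add: sum.distrib add_divide_distrib)
  qed
  ultimately show ?thesis
    by (simp add: Lim_transform_eventually eventually_sequentiallyI[of 1])
qed

section \<open>Pushforwards under linear cellular automata\<close>

lemma measurable_LCA_funpow:
  fixes F :: "('m::monoid_mult \<Rightarrow> 'a::{ab_group_add,finite}) \<Rightarrow> ('m \<Rightarrow> 'a)"
  assumes "is_LCA F" "sets \<mu> = sets cfg_space"
  shows "F ^^ j \<in> measurable \<mu> cfg_space"
  using measurable_continuous_map_cfg[OF continuous_map_LCA_funpow[OF assms(1)]]
  by (simp add: measurable_cong_sets[OF assms(2) refl])

lemma prob_space_push: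
  fixes F :: "('m::monoid_mult \<Rightarrow> 'a::{ab_group_add,finite}) \<Rightarrow> ('m \<Rightarrow> 'a)"
  assumes "is_LCA F" "prob_space \<mu>" "sets \<mu> = sets cfg_space"
  shows "prob_space (push F j \<mu>)"
  unfolding push_def by (rule prob_space.prob_space_distr[OF assms(2) measurable_LCA_funpow[OF assms(1,3)]])

lemma sets_push: "sets (push F j \<mu>) = sets cfg_space"
  by (simp add: push_def)

lemma integral_push:
  fixes F :: "('m::monoid_mult \<Rightarrow> 'a::{ab_group_add,finite}) \<Rightarrow> ('m \<Rightarrow> 'a)"
    and h :: "('m \<Rightarrow> 'a) \<Rightarrow> 'b::{banach,second_countable_topology}"
  assumes "is_LCA F" "sets \<mu> = sets cfg_space" "h \<in> borel_measurable cfg_space"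
  shows "integral\<^sup>L (push F j \<mu>) h = integral\<^sup>L \<mu> (h \<circ> (F ^^ j))"
  unfolding push_def comp_def by (rule integral_distr[OF measurable_LCA_funpow[OF assms(1,2)] assms(3)])

lemma characters_comp_LCA_funpow:
  fixes F :: "('m::monoid_mult \<Rightarrow> 'a::{ab_group_add,finite}) \<Rightarrow> ('m \<Rightarrow> 'a)"
  assumes "is_LCA F" "ch \<in> characters"
  shows "ch \<circ> (F ^^ j) \<in> characters"
  using characters_comp_continuous_additive[OF continuous_map_LCA_funpow LCA_funpow_add] assms
  by blast

lemma harmonically_mixing_integral_tendsto_0:
  assumes mixing: "harmonically_mixing \<mu>" and chars: "\<And>j. ch j \<in> characters"
    and rank: "filterlim (\<lambda>j. char_rank (ch j)) at_top G"
  shows "((\<lambda>j. integral\<^sup>L \<mu> (ch j)) \<longlongrightarrow> 0) G"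
proof (rule tendstoI)
  fix e :: real assume "e > 0"
  then obtain R where R: "\<And>\<psi>. \<psi> \<in> characters \<Longrightarrow> R < char_rank \<psi> \<Longrightarrow> norm (LINT x|\<mu>. \<psi> x) < e"
    using mixing unfolding harmonically_mixing_def by blast
  have "\<forall>\<^sub>F j in G. Suc R \<le> char_rank (ch j)"
    using rank unfolding filterlim_at_top by blast
  then show "\<forall>\<^sub>F j in G. dist (integral\<^sup>L \<mu> (ch j)) 0 < e"
    by eventually_elim (use R chars in auto)
qed

lemma integral_push_list_char_tendsto:
  fixes F :: "('m::monoid_mult \<Rightarrow> 'a::{ab_group_add,finite}) \<Rightarrow> ('m \<Rightarrow> 'a)"
  assumes F: "is_LCA F" and \<mu>: "prob_space \<mu>" "sets \<mu> = sets cfg_space"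
    and mixing: "harmonically_mixing \<mu>"
    and rank: "list_char l \<noteq> (\<lambda>_. 1) \<Longrightarrow> filterlim (\<lambda>j. char_rank (list_char l \<circ> (F ^^ j))) at_top G"
  shows "((\<lambda>j. integral\<^sup>L (push F j \<mu>) (list_char l)) \<longlongrightarrow> integral\<^sup>L haar (list_char l)) G"
proof (cases "list_char l = (\<lambda>_. 1)")
  case True
  have "integral\<^sup>L (push F j \<mu>) (list_char l) = 1" for j
  proof -
    interpret prob_space "push F j \<mu>" by (rule prob_space_push[OF F \<mu>])
    show ?thesis using True by (simp add: prob_space)
  qed
  then show ?thesis using integral_haar_characters[OF list_char_in_characters, of l] True by simp
next
  case False
  have "integral\<^sup>L (push F j \<mu>) (list_char l) = integral\<^sup>L \<mu> (list_char l \<circ> (F ^^ j))" for j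
    by (rule integral_push[OF F \<mu>(2) borel_measurable_characters[OF list_char_in_characters]])
  moreover have "((\<lambda>j. integral\<^sup>L \<mu> (list_char l \<circ> (F ^^ j))) \<longlongrightarrow> 0) G"
    using characters_comp_LCA_funpow[OF F list_char_in_characters] rank[OF False]
    by (rule harmonically_mixing_integral_tendsto_0[OF mixing])
  ultimately show ?thesis using integral_haar_characters[OF list_char_in_characters, of l] False by simp
qed

lemma weak_star_conv_push_if_diffusive:
  fixes F :: "('m::monoid_mult \<Rightarrow> 'a::{ab_group_add,finite}) \<Rightarrow> ('m \<Rightarrow> 'a)"
  assumes F: "is_LCA F" and \<mu>: "prob_space \<mu>" "sets \<mu> = sets cfg_space"
    and mixing: "harmonically_mixing \<mu>" and "diffusive F"
  shows "weak_star_conv (\<lambda>j. push F j \<mu>) haar sequentially"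
proof (rule weak_star_conv_haar_if_list_char[OF prob_space_push[OF F \<mu>] sets_push])
  show "((\<lambda>j. integral\<^sup>L (push F j \<mu>) (list_char l)) \<longlongrightarrow> integral\<^sup>L haar (list_char l)) sequentially" for l
    using \<open>diffusive F\<close> list_char_in_characters
    by (intro integral_push_list_char_tendsto[OF F \<mu> mixing]) (auto simp: diffusive_def)
qed

lemma weak_star_conv_push_if_diffusive_in_density:
  fixes F :: "('m::{monoid_mult,countable} \<Rightarrow> 'a::{ab_group_add,finite}) \<Rightarrow> ('m \<Rightarrow> 'a)"
  assumes F: "is_LCA F" and \<mu>: "prob_space \<mu>" "sets \<mu> = sets cfg_space"
    and mixing: "harmonically_mixing \<mu>" and diff: "diffusive_in_density F"
  obtains J where "density_one J" "weak_star_conv (\<lambda>j. push F j \<mu>) haar (sequentially \<sqinter> principal J)"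
proof -
  have "\<exists>J. density_one J \<and> (list_char l \<noteq> (\<lambda>_. 1) \<longrightarrow>
      filterlim (\<lambda>j. char_rank (list_char l \<circ> (F ^^ j))) at_top (sequentially \<sqinter> principal J))"
    for l :: "('m \<times> 'a) list"
    using diff list_char_in_characters[of l] density_one_UNIV
    unfolding diffusive_in_density_def by blast
  then obtain Jl where Jl: "\<And>l. density_one (Jl l)" "\<And>l. list_char l \<noteq> (\<lambda>_. 1) \<Longrightarrow>
      filterlim (\<lambda>j. char_rank (list_char l \<circ> (F ^^ j))) at_top (sequentially \<sqinter> principal (Jl l))"
    by metis
  obtain J where J: "density_one J" "\<And>l. finite (J - Jl l)"
    using density_one_countable_diagonal[of Jl] Jl(1) by blast
  have "weak_star_conv (\<lambda>j. push F j \<mu>) haar (sequentially \<sqinter> principal J)"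
  proof (rule weak_star_conv_haar_if_list_char[OF prob_space_push[OF F \<mu>] sets_push])
    show "((\<lambda>j. integral\<^sup>L (push F j \<mu>) (list_char l)) \<longlongrightarrow> integral\<^sup>L haar (list_char l))
        (sequentially \<sqinter> principal J)" for l
      using Jl(2) filterlim_mono[OF _ order_refl sequentially_inf_principal_mono[OF J(2)]]
      by (intro integral_push_list_char_tendsto[OF F \<mu> mixing]) blast
  qed
  with J(1) show ?thesis by (rule that)
qed

lemma cesaro_mean_integral_tendsto:
  fixes \<nu> :: "nat \<Rightarrow> ('m \<Rightarrow> 'a::{ab_group_add,finite}) measure"
  assumes \<nu>: "\<And>n. prob_space (\<nu> n)" "\<And>n. sets (\<nu> n) = sets cfg_space"
    and J: "density_one J" and conv: "weak_star_conv \<nu> \<mu> (sequentially \<sqinter> principal J)"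
    and f: "continuous_map cfg_topology euclideanreal f"
  shows "(\<lambda>N. (\<Sum>n=1..N. integral\<^sup>L (\<nu> n) f) / N) \<longlonglongrightarrow> integral\<^sup>L \<mu> f"
proof -
  obtain B where B: "\<And>x. \<bar>f x\<bar> \<le> B" using bounded_continuous_map_cfg[OF f] by blast
  have "\<bar>integral\<^sup>L (\<nu> n) f\<bar> \<le> B" for n
  proof -
    interpret prob_space "\<nu> n" by (rule \<nu>(1))
    have "integrable (\<nu> n) f"
      using integrable_bounded_cfg[OF \<nu> borel_measurable_continuous_map_cfg[OF f]] B by auto
    then show ?thesis using integral_uniformly_close[of f "\<lambda>_. 0" B] B by simp
  qed
  moreover have "((\<lambda>n. integral\<^sup>L (\<nu> n) f) \<longlongrightarrow> integral\<^sup>L \<mu> f) (sequentially \<sqinter> principal J)"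
    using conv f unfolding weak_star_conv_def by blast
  ultimately show ?thesis using cesaro_mean_density_one[OF J] by blast
qed

theorem mainTheorem9:
  fixes F :: "('m::{monoid_mult,countable} \<Rightarrow> 'a::{ab_group_add,finite}) \<Rightarrow> ('m \<Rightarrow> 'a)"
    and \<mu> :: "('m \<Rightarrow> 'a) measure"
  assumes "is_LCA F"
    and "prob_space \<mu>" and "sets \<mu> = sets cfg_space"
    and "harmonically_mixing \<mu>"
  shows "(diffusive F \<longrightarrow> weak_star_conv (\<lambda>j. push F j \<mu>) haar sequentially)
       \<and> (diffusive_in_density F \<longrightarrow>
            (\<exists>J. density_one J \<and> weak_star_conv (\<lambda>j. push F j \<mu>) haar (sequentially \<sqinter> principal J))
          \<and> (\<forall>f. continuous_map cfg_topology euclideanreal f \<longrightarrow>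
               (\<lambda>N. (\<Sum>n=1..N. integral\<^sup>L (push F n \<mu>) f) / real N) \<longlonglongrightarrow> integral\<^sup>L haar f))"
proof (intro conjI impI)
  show "weak_star_conv (\<lambda>j. push F j \<mu>) haar sequentially" if "diffusive F"
    using weak_star_conv_push_if_diffusive[OF assms that] .
  assume "diffusive_in_density F"
  then obtain J where J: "density_one J"
    and conv: "weak_star_conv (\<lambda>j. push F j \<mu>) haar (sequentially \<sqinter> principal J)"
    by (rule weak_star_conv_push_if_diffusive_in_density[OF assms])
  then show "\<exists>J. density_one J \<and> weak_star_conv (\<lambda>j. push F j \<mu>) haar (sequentially \<sqinter> principal J)"
    by blast
  show "\<forall>f. continuous_map cfg_topology euclideanreal f \<longrightarrow>
      (\<lambda>N. (\<Sum>n=1..N. integral\<^sup>L (push F n \<mu>) f) / real N) \<longlonglongrightarrow> integral\<^sup>L haar f"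
    using cesaro_mean_integral_tendsto[OF prob_space_push[OF assms(1-3)] sets_push J conv] by blast
qed

end
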